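(* Let $1\le a\le b\le n$, $h\in H_{n,\varpi_a}$ and $E\in B(\varpi_a)$. Write $$t^{\ell(u_E)}(T_{u_E^{-1}})^{-1}h=\sum_{F\in B(\varpi_b)}T_{u_F}h_F\qquad\text{with } h_F\in H_{n,\varpi_b}.$$ If $F\otimes E$ is not semistandard, then $h_F=0$.
   Context: Fix $n\ge1$, $[n]=\{1,\dots,n\}$. $S_n$ with simple transpositions $s_i$ and length $\ell(\cdot)$ acts on $\mathbb Z^n$ by permuting coordinates; $\varpi_k=\varepsilon_1+\dots+\varepsilon_k$; $S_{n,\lambda}$ is the stabilizer of $\lambda$. $H_n$ is the Iwahori–Hecke algebra of $S_n$ over $\mathbb Z[t^{\pm1}]$: generators $T_1,\dots,T_{n-1}$ with $T_i^2=(t-1)T_i+t$, $T_iT_{i+1}T_i=T_{i+1}T_iT_{i+1}$, $T_iT_j=T_jT_i$ ($|i-j|>1$); $T_w=T_{i_1}\cdots T_{i_m}$ for a reduced word; $\{T_w\}$ is a basis; $H_{n,\lambda}=\mathrm{span}\{T_w:w\in S_{n,\lambda}\}$. Every element of $H_n$ has a unique expression $\sum_{F\in B(\varpi_b)}T_{u_F}h_F$ with $h_F\in H_{n,\varpi_b}$. Columns: $B(\varpi_\ell)$ is the set of $C=(c_1<\dots<c_\ell)\subseteq[n]$; $u_C\in S_n$ sends $k\mapsto c_k$ ($k\le\ell$) and $\ell+1,\dots,n$ increasingly onto $[n]\setminus C$. For $F\in B(\varpi_b)$, $E\in B(\varpi_a)$, $a\le b$, $F\otimes E$ is the two-column filling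 with left column $F$ and right column $E$; it is semistandard iff $f_i\le e_i$ for all $i\in[a]$. *)

theory Defs
  imports "HOL-Library.Poly_Mapping" "HOL-Combinatorics.Permutations" "HOL-Combinatorics.Transposition"
begin

section \<open>Laurent polynomials Z[t, t^-1] as the group ring Z[Z]\<close>

type_synonym laurent = "int \<Rightarrow>\<^sub>0 int"

definition tvar :: laurent where "tvar = Poly_Mapping.single 1 1"
definition tinv :: laurent where "tinv = Poly_Mapping.single (-1) 1"

definition Sn :: "nat \<Rightarrow> (nat \<Rightarrow> nat) set" where
  "Sn n = {w. w permutes {1..n}}"

definition simple :: "nat \<Rightarrow> nat \<Rightarrow> nat" where
  "simple i = transpose i (Suc i)"

definition len :: "nat \<Rightarrow> (nat \<Rightarrow> nat) \<Rightarrow> nat" where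
  "len n w = card {(i, j). 1 \<le> i \<and> i < j \<and> j \<le> n \<and> w i > w j}"

definition word_perm :: "nat list \<Rightarrow> nat \<Rightarrow> nat" where
  "word_perm ws = foldr (\<lambda>i acc. simple i \<circ> acc) ws id"

definition reduced_word :: "nat \<Rightarrow> (nat \<Rightarrow> nat) \<Rightarrow> nat list" where
  "reduced_word n w = (SOME ws. (\<forall>i\<in>set ws. 1 \<le> i \<and> i < n) \<and>
       word_perm ws = w \<and> length ws = len n w)"

section \<open>Iwahori-Hecke algebra H_n: coefficient functions w.r.t. the basis T_w\<close>

type_synonym hecke = "(nat \<Rightarrow> nat) \<Rightarrow> laurent"

definition in_Hn :: "nat \<Rightarrow> hecke \<Rightarrow> bool" where
  "in_Hn n h \<longleftrightarrow> (\<forall>w. w \<notin> Sn n \<longrightarrow> h w = 0)"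

definition Tb :: "(nat \<Rightarrow> nat) \<Rightarrow> hecke" where
  "Tb u = (\<lambda>w. if w = u then 1 else 0)"

definition hone :: hecke where "hone = Tb id"

definition hsmult :: "laurent \<Rightarrow> hecke \<Rightarrow> hecke" where
  "hsmult c h = (\<lambda>w. c * h w)"

text \<open>right multiplication by T_i, using
  T_w T_i = T_{w s_i} if l(w s_i) > l(w), and (t-1) T_w + t T_{w s_i} otherwise\<close>
definition rmul_s :: "nat \<Rightarrow> nat \<Rightarrow> hecke \<Rightarrow> hecke" where
  "rmul_s n i h = (\<lambda>w. if len n (w \<circ> simple i) < len n w
      then (tvar - 1) * h w + h (w \<circ> simple i)
      else tvar * h (w \<circ> simple i))"

definition rmul_T :: "nat \<Rightarrow> hecke \<Rightarrow> (nat \<Rightarrow> nat) \<Rightarrow> hecke" where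
  "rmul_T n h u = fold (rmul_s n) (reduced_word n u) h"

definition hmult :: "nat \<Rightarrow> hecke \<Rightarrow> hecke \<Rightarrow> hecke" where
  "hmult n h g = (\<lambda>w. \<Sum>u\<in>Sn n. g u * rmul_T n h u w)"

definition hinverse :: "nat \<Rightarrow> hecke \<Rightarrow> hecke" where
  "hinverse n x = (THE y. in_Hn n y \<and> hmult n x y = hone \<and> hmult n y x = hone)"

definition perm_act :: "(nat \<Rightarrow> nat) \<Rightarrow> (nat \<Rightarrow> int) \<Rightarrow> (nat \<Rightarrow> int)" where
  "perm_act w mu = (\<lambda>i. mu (inv w i))"

definition varpi :: "nat \<Rightarrow> nat \<Rightarrow> int" where
  "varpi k = (\<lambda>i. if 1 \<le> i \<and> i \<le> k then 1 else 0)"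

definition stab :: "nat \<Rightarrow> (nat \<Rightarrow> int) \<Rightarrow> (nat \<Rightarrow> nat) set" where
  "stab n mu = {w \<in> Sn n. perm_act w mu = mu}"

definition in_Hpar :: "nat \<Rightarrow> (nat \<Rightarrow> int) \<Rightarrow> hecke \<Rightarrow> bool" where
  "in_Hpar n mu h \<longleftrightarrow> (\<forall>w. w \<notin> stab n mu \<longrightarrow> h w = 0)"

definition B :: "nat \<Rightarrow> nat \<Rightarrow> nat set set" where
  "B n l = {C. C \<subseteq> {1..n} \<and> card C = l}"

definition col :: "nat set \<Rightarrow> nat \<Rightarrow> nat" where
  "col C k = sorted_list_of_set C ! (k - 1)"

definition uC :: "nat \<Rightarrow> nat set \<Rightarrow> nat \<Rightarrow> nat" where
  "uC n C = (\<lambda>k. if 1 \<le> k \<and> k \<le> n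
      then (sorted_list_of_set C @ sorted_list_of_set ({1..n} - C)) ! (k - 1)
      else k)"

definition semistandard :: "nat \<Rightarrow> nat set \<Rightarrow> nat set \<Rightarrow> bool" where
  "semistandard a F E \<longleftrightarrow> (\<forall>i\<in>{1..a}. col F i \<le> col E i)"

end

theory Submission
  imports Defs
begin

text \<open>
  Let \<open>ws\<close> be a reduced word for \<open>u = u_E\<close>.  Since \<open>t T_i^-1 = T_i + 1 - t\<close>, the element
  \<open>t^l(u) (T_(u^-1))^-1\<close> is the product of the \<open>T_i + 1 - t\<close> along \<open>ws\<close>, and by the lifting
  property of the Bruhat order every permutation \<open>v\<close> in its support satisfies the tableau criterion
  \<open>v \<le> u\<close>; in particular \<open>v ` {1..a}\<close> has, below every bound \<open>M\<close>, at least as many entries as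
  \<open>u ` {1..a} = E\<close>.  Right multiplication by \<open>h \<in> H_(n,\<varpi>_a)\<close> keeps coefficients inside the cosets
  \<open>v S_(n,\<varpi>_a)\<close>, so the left-hand side is supported on such \<open>w\<close> as well.  On the other side
  \<open>T_(u_G) h_G\<close> is supported on \<open>{w. w ` {1..b} = G}\<close>, and these sets are disjoint.  If \<open>F \<otimes> E\<close>
  is not semistandard, some bound \<open>M\<close> has fewer entries of \<open>F\<close> than of \<open>E\<close> below it, so no \<open>w\<close>
  with \<open>w ` {1..b} = F\<close> lies in the support of the left-hand side.  Hence \<open>T_(u_F) h_F = 0\<close>, and
  \<open>h_F = 0\<close> because \<open>T_(u_F)\<close> is invertible.
\<close>

section \<open>Simple transpositions and length\<close>

lemma simple_simple [simp]: "simple i (simple i x) = x"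
  by (simp add: simple_def transpose_def)

lemma simple_comp_simple [simp]: "simple i \<circ> simple i = id"
  by (auto simp: fun_eq_iff)

lemma simple_permutes: "1 \<le> i \<Longrightarrow> i < n \<Longrightarrow> simple i permutes {1..n}"
  unfolding simple_def by (rule permutes_swap_id) auto

lemma Sn_id [simp]: "id \<in> Sn n"
  by (simp add: Sn_def permutes_id)

lemma finite_Sn [simp]: "finite (Sn n)"
  unfolding Sn_def by (rule finite_permutations) simp

lemma simple_in_Sn: "1 \<le> i \<Longrightarrow> i < n \<Longrightarrow> simple i \<in> Sn n"
  using simple_permutes by (simp add: Sn_def)

lemma Sn_comp: "v \<in> Sn n \<Longrightarrow> w \<in> Sn n \<Longrightarrow> v \<circ> w \<in> Sn n"
  unfolding Sn_def by (simp add: permutes_compose)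

lemma Sn_inv: "w \<in> Sn n \<Longrightarrow> inv w \<in> Sn n"
  unfolding Sn_def by (simp add: permutes_inv)

lemma Sn_inv_inv: "w \<in> Sn n \<Longrightarrow> inv (inv w) = w"
  unfolding Sn_def by (simp add: permutes_inv_inv)

lemma Sn_inj: "w \<in> Sn n \<Longrightarrow> inj w"
  unfolding Sn_def by (simp add: permutes_inj)

lemma Sn_apply_mem: "w \<in> Sn n \<Longrightarrow> x \<in> {1..n} \<Longrightarrow> w x \<in> {1..n}"
  unfolding Sn_def using permutes_in_image[of w "{1..n}" x] by simp

lemma Sn_inv_apply: "w \<in> Sn n \<Longrightarrow> w (inv w x) = x" "w \<in> Sn n \<Longrightarrow> inv w (w x) = x"
  unfolding Sn_def by (auto simp: permutes_inverses)

lemma Sn_outside: "w \<in> Sn n \<Longrightarrow> x \<notin> {1..n} \<Longrightarrow> w x = x"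
  unfolding Sn_def by (simp add: permutes_not_in)

lemma Sn_comp_simple_iff:
  assumes "1 \<le> i" "i < n" shows "w \<circ> simple i \<in> Sn n \<longleftrightarrow> w \<in> Sn n"
proof
  assume "w \<circ> simple i \<in> Sn n"
  then have "w \<circ> simple i \<circ> simple i \<in> Sn n" using Sn_comp simple_in_Sn[OF assms] by blast
  then show "w \<in> Sn n" by (simp add: comp_assoc)
qed (simp add: Sn_comp simple_in_Sn[OF assms])

lemma Sn_simple_comp_iff:
  assumes "1 \<le> i" "i < n" shows "simple i \<circ> w \<in> Sn n \<longleftrightarrow> w \<in> Sn n"
proof
  assume "simple i \<circ> w \<in> Sn n"
  then have "simple i \<circ> (simple i \<circ> w) \<in> Sn n" using Sn_comp simple_in_Sn[OF assms] by blast
  then show "w \<in> Sn n" by (simp flip: comp_assoc)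
qed (simp add: Sn_comp simple_in_Sn[OF assms])

definition inversions :: "nat \<Rightarrow> (nat \<Rightarrow> nat) \<Rightarrow> (nat \<times> nat) set" where
  "inversions n w = {(i, j). 1 \<le> i \<and> i < j \<and> j \<le> n \<and> w i > w j}"

lemma len_eq_card_inversions: "len n w = card (inversions n w)"
  by (simp add: len_def inversions_def)

lemma finite_inversions [simp]: "finite (inversions n w)"
  by (rule finite_subset[of _ "{1..n} \<times> {1..n}"]) (auto simp: inversions_def)

text \<open>Apart from the pair \<open>(i, i+1)\<close>, the inversions of \<open>w \<circ> s\<^sub>i\<close> and of \<open>w\<close> correspond
  under \<open>s\<^sub>i \<times> s\<^sub>i\<close>.\<close>
lemma card_inversions_comp_simple:
  assumes "1 \<le> i" "i < n"
  shows "card (inversions n (w \<circ> simple i) - {(i, Suc i)}) = card (inversions n w - {(i, Suc i)})"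
proof (rule bij_betw_same_card)
  let ?f = "\<lambda>(p, q). (simple i p, simple i q)"
  have mem: "?f x \<in> inversions n w - {(i, Suc i)} \<longleftrightarrow> x \<in> inversions n (w \<circ> simple i) - {(i, Suc i)}"
    for x
    using assms by (cases x) (auto simp: inversions_def simple_def transpose_def split: if_splits)
  show "bij_betw ?f (inversions n (w \<circ> simple i) - {(i, Suc i)}) (inversions n w - {(i, Suc i)})"
  proof (rule bij_betwI[where g = ?f])
    have ff: "?f (?f x) = x" for x by (cases x) simp
    show "?f \<in> inversions n (w \<circ> simple i) - {(i, Suc i)} \<rightarrow> inversions n w - {(i, Suc i)}"
      using mem by blast
    show "?f \<in> inversions n w - {(i, Suc i)} \<rightarrow> inversions n (w \<circ> simple i) - {(i, Suc i)}"
      using mem ff by (metis Pi_I)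
  qed (simp_all add: case_prod_beta)
qed

lemma len_comp_simple_ascent:
  assumes "1 \<le> i" "i < n" "w i < w (Suc i)"
  shows "len n (w \<circ> simple i) = Suc (len n w)"
proof -
  have "(i, Suc i) \<in> inversions n (w \<circ> simple i)" "(i, Suc i) \<notin> inversions n w"
    using assms by (auto simp: inversions_def simple_def)
  then have "card (inversions n (w \<circ> simple i))
      = Suc (card (inversions n (w \<circ> simple i) - {(i, Suc i)}))"
    by (simp only: card_Suc_Diff1 finite_inversions)
  also have "\<dots> = Suc (card (inversions n w))"
    using card_inversions_comp_simple[OF assms(1,2), of w] \<open>(i, Suc i) \<notin> inversions n w\<close> by simp
  finally show ?thesis by (simp add: len_eq_card_inversions)
qed

lemma len_comp_simple_descent:
  assumes "1 \<le> i" "i < n" "w (Suc i) < w i"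
  shows "Suc (len n (w \<circ> simple i)) = len n w"
proof -
  have e: "w \<circ> simple i \<circ> simple i = w"
    by (simp add: fun_eq_iff)
  have "(w \<circ> simple i) i < (w \<circ> simple i) (Suc i)"
    using assms by (simp add: simple_def)
  from len_comp_simple_ascent[OF assms(1,2) this] show ?thesis
    unfolding e by (rule sym)
qed

lemma len_comp_simple_le:
  assumes "1 \<le> i" "i < n" shows "len n (w \<circ> simple i) \<le> Suc (len n w)"
proof -
  have "card (inversions n (w \<circ> simple i)) \<le> Suc (card (inversions n (w \<circ> simple i) - {(i, Suc i)}))"
  proof (cases "(i, Suc i) \<in> inversions n (w \<circ> simple i)")
    case True then show ?thesis by (simp only: card_Suc_Diff1 finite_inversions order_refl)
  qed simp
  also have "\<dots> \<le> Suc (card (inversions n w))"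
    using card_inversions_comp_simple[OF assms, of w] by (simp add: card_Diff1_le)
  finally show ?thesis by (simp add: len_eq_card_inversions)
qed

lemma len_comp_simple_less_iff:
  assumes "w \<in> Sn n" "1 \<le> i" "i < n"
  shows "len n (w \<circ> simple i) < len n w \<longleftrightarrow> w (Suc i) < w i"
proof -
  have "w i \<noteq> w (Suc i)" using Sn_inj[OF assms(1)] by (simp add: inj_eq)
  then consider "w i < w (Suc i)" | "w (Suc i) < w i" by linarith
  then show ?thesis
  proof cases
    case 1 then show ?thesis using len_comp_simple_ascent[OF assms(2,3), of w] by simp
  next
    case 2 then show ?thesis using len_comp_simple_descent[OF assms(2,3), of w] by simp
  qed
qed

lemma len_id [simp]: "len n id = 0" "len n (\<lambda>x. x) = 0"
proof -
  show "len n id = 0" unfolding len_def by (auto simp: card_eq_0_iff)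
  then show "len n (\<lambda>x. x) = 0" by (simp add: id_def)
qed

lemma len_simple:
  assumes "1 \<le> i" "i < n" shows "len n (simple i) = 1"
proof -
  have "len n (id \<circ> simple i) = Suc (len n id)"
    by (rule len_comp_simple_ascent[OF assms]) simp
  then show ?thesis by (metis id_comp len_id(1) One_nat_def)
qed

section \<open>Words and reduced words\<close>

definition valid_word :: "nat \<Rightarrow> nat list \<Rightarrow> bool" where
  "valid_word n ws \<longleftrightarrow> (\<forall>i\<in>set ws. 1 \<le> i \<and> i < n)"

lemma valid_word_simps [simp]:
  "valid_word n []"
  "valid_word n (i # ws) \<longleftrightarrow> 1 \<le> i \<and> i < n \<and> valid_word n ws"
  "valid_word n (ws @ vs) \<longleftrightarrow> valid_word n ws \<and> valid_word n vs"
  "valid_word n (rev ws) \<longleftrightarrow> valid_word n ws"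
  by (auto simp: valid_word_def)

lemma word_perm_Nil [simp]: "word_perm [] = id"
  by (simp add: word_perm_def)

lemma word_perm_Cons [simp]: "word_perm (i # ws) = simple i \<circ> word_perm ws"
  by (simp add: word_perm_def)

lemma word_perm_append [simp]: "word_perm (ws @ vs) = word_perm ws \<circ> word_perm vs"
  by (induction ws) (auto simp: comp_assoc)

lemma word_perm_in_Sn: "valid_word n ws \<Longrightarrow> word_perm ws \<in> Sn n"
  by (induction ws) (auto simp: Sn_simple_comp_iff)

lemma word_perm_rev: "word_perm (rev ws) = inv (word_perm ws)"
proof -
  have *: "word_perm (rev xs) \<circ> word_perm xs = id" for xs
    by (induction xs) (auto simp: fun_eq_iff)
  show ?thesis
    using *[of ws] *[of "rev ws"] by (simp add: inv_unique_comp)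
qed

lemma len_comp_word_perm_le:
  "valid_word n ws \<Longrightarrow> len n (v \<circ> word_perm ws) \<le> len n v + length ws"
proof (induction ws arbitrary: v)
  case (Cons i ws)
  have "len n (v \<circ> word_perm (i # ws)) = len n ((v \<circ> simple i) \<circ> word_perm ws)"
    by (simp add: comp_assoc)
  also have "\<dots> \<le> len n (v \<circ> simple i) + length ws"
    using Cons.IH[of "v \<circ> simple i"] Cons.prems by (simp add: comp_def)
  also have "\<dots> \<le> len n v + length (i # ws)"
    using len_comp_simple_le[of i n v] Cons.prems by simp
  finally show ?case .
qed simp

lemma Sn_no_descent_eq_id:
  assumes w: "w \<in> Sn n" and asc: "\<And>i. 1 \<le> i \<Longrightarrow> i < n \<Longrightarrow> w i < w (Suc i)"
  shows "w = id"
proof -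
  have ge: "k \<le> w k" if "1 \<le> k" "k \<le> n" for k
    using that
  proof (induction k)
    case (Suc k)
    show ?case
    proof (cases "k = 0")
      case True
      then show ?thesis using Sn_apply_mem[OF w, of 1] Suc.prems by simp
    next
      case False
      then have "k \<le> w k" "w k < w (Suc k)" using Suc asc[of k] by simp_all
      then show ?thesis by linarith
    qed
  qed simp
  have le: "w k \<le> k" if "1 \<le> k" "k \<le> n" for k
    using that
  proof (induction "n - k" arbitrary: k)
    case 0
    then show ?case using Sn_apply_mem[OF w, of k] by simp
  next
    case (Suc m)
    then have "k < n" by simp
    with Suc have "w (Suc k) \<le> Suc k" "w k < w (Suc k)" using asc[of k] by simp_all
    then show ?case by linarith
  qed
  show ?thesis
  proof
    fix x
    show "w x = id x"
    proof (cases "x \<in> {1..n}")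
      case True then show ?thesis using ge le by (simp add: le_antisym)
    next
      case False then show ?thesis using Sn_outside[OF w] by simp
    qed
  qed
qed

lemma simple_mem_atLeastAtMost_iff:
  "1 \<le> i \<Longrightarrow> i \<noteq> a \<Longrightarrow> simple i x \<in> {1..a} \<longleftrightarrow> x \<in> {1..a}"
  unfolding simple_def transpose_def
  by (cases "x = i"; cases "x = Suc i") (simp_all, linarith+)

lemma simple_image_atLeastAtMost:
  assumes "1 \<le> i" "i \<noteq> a" shows "simple i ` {1..a} = {1..a}"
proof
  show "simple i ` {1..a} \<subseteq> {1..a}"
    using simple_mem_atLeastAtMost_iff[OF assms] by blast
  show "{1..a} \<subseteq> simple i ` {1..a}"
  proof
    fix x assume "x \<in> {1..a}"
    then have "simple i x \<in> {1..a}" using simple_mem_atLeastAtMost_iff[OF assms, of x] by simp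
    then show "x \<in> simple i ` {1..a}" using image_eqI[of x "simple i" "simple i x"] by simp
  qed
qed

lemma comp_simple_image_atLeastAtMost:
  assumes "1 \<le> i" "i \<noteq> a" shows "(w \<circ> simple i) ` {1..a} = w ` {1..a}"
  unfolding image_comp[symmetric] simple_image_atLeastAtMost[OF assms] ..

lemma Sn_descent_exists:
  assumes w: "w \<in> Sn n" and "w \<noteq> id"
  obtains i where "1 \<le> i" "i < n" "w (Suc i) < w i"
proof -
  have "\<exists>i. 1 \<le> i \<and> i < n \<and> w (Suc i) < w i"
  proof (rule ccontr)
    assume no_descent: "\<not> ?thesis"
    have "w = id"
    proof (rule Sn_no_descent_eq_id[OF w])
      fix i assume "1 \<le> i" "i < n"
      moreover have "w i \<noteq> w (Suc i)" using Sn_inj[OF w] by (simp add: inj_eq)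
      ultimately show "w i < w (Suc i)" using no_descent by auto
    qed
    with \<open>w \<noteq> id\<close> show False by simp
  qed
  with that show ?thesis by blast
qed

lemma len_eq_0_iff: "w \<in> Sn n \<Longrightarrow> len n w = 0 \<longleftrightarrow> w = id"
  by (metis Sn_descent_exists len_comp_simple_less_iff len_id(1) not_less_zero)

lemma stab_atLeastAtMost_ascent:
  assumes w: "w \<in> Sn n" and stab: "w ` {1..a} = {1..a}" and a: "1 \<le> a" "a < n"
  shows "w a < w (Suc a)"
proof -
  have "w (Suc a) \<notin> w ` {1..a}"
    using Sn_inj[OF w] by (simp add: inj_image_mem_iff)
  moreover have "1 \<le> w (Suc a)" using Sn_apply_mem[OF w, of "Suc a"] a by simp
  moreover have "w a \<in> {1..a}" using stab a by auto
  ultimately show ?thesis using stab by auto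
qed

text \<open>Right descents are stripped one at a time; a descent at \<open>a\<close> is impossible while \<open>w\<close>
  stabilises \<open>{1..a}\<close>.\<close>
lemma reduced_word_exists_avoiding:
  assumes "w \<in> Sn n" "w ` {1..a} = {1..a}"
  shows "\<exists>ws. valid_word n ws \<and> a \<notin> set ws \<and> word_perm ws = w \<and> length ws = len n w"
  using assms
proof (induction "len n w" arbitrary: w)
  case 0
  then have "w = id" using len_eq_0_iff by metis
  then show ?case by (intro exI[of _ "[]"]) simp
next
  case (Suc k)
  then have "w \<noteq> id" by (metis len_id(1) nat.distinct(1))
  with Suc(3) obtain i where i: "1 \<le> i" "i < n" "w (Suc i) < w i"
    by (rule Sn_descent_exists)
  have "i \<noteq> a" using stab_atLeastAtMost_ascent[OF Suc(3,4)] i by force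
  let ?y = "w \<circ> simple i"
  have y1: "k = len n ?y" using len_comp_simple_descent[OF i] Suc(2) by simp
  have y2: "?y \<in> Sn n" using Sn_comp_simple_iff[OF i(1,2)] Suc(3) by simp
  have y3: "?y ` {1..a} = {1..a}"
    unfolding comp_simple_image_atLeastAtMost[OF i(1) \<open>i \<noteq> a\<close>] by (rule Suc(4))
  from Suc(1)[OF y1 y2 y3] obtain ws
    where ws: "valid_word n ws" "a \<notin> set ws" "word_perm ws = ?y" "length ws = len n ?y"
    by blast
  have "word_perm (ws @ [i]) = w" using ws(3) by (simp add: comp_assoc)
  then show ?case
    using ws i \<open>i \<noteq> a\<close> y1 Suc(2) by (intro exI[of _ "ws @ [i]"]) simp
qed

lemma reduced_word_spec:
  assumes "w \<in> Sn n"
  shows "valid_word n (reduced_word n w)" "word_perm (reduced_word n w) = w"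
    "length (reduced_word n w) = len n w"
proof -
  define P where "P ws \<longleftrightarrow> valid_word n ws \<and> word_perm ws = w \<and> length ws = len n w" for ws
  have rw: "reduced_word n w = (SOME ws. P ws)"
    unfolding reduced_word_def P_def valid_word_def ..
  obtain ws where "P ws"
    using reduced_word_exists_avoiding[OF assms, of 0] unfolding P_def by auto
  then have "P (reduced_word n w)"
    unfolding rw by (rule someI)
  then show "valid_word n (reduced_word n w)" "word_perm (reduced_word n w) = w"
    "length (reduced_word n w) = len n w"
    unfolding P_def by simp_all
qed

lemma len_inv: "w \<in> Sn n \<Longrightarrow> len n (inv w) = len n w"
proof -
  have le: "len n (inv w) \<le> len n w" if "w \<in> Sn n" for w
  proof -
    note r = reduced_word_spec[OF that]
    have "inv w = id \<circ> word_perm (rev (reduced_word n w))"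
      unfolding word_perm_rev r(2) by simp
    then show ?thesis
      using len_comp_word_perm_le[of n "rev (reduced_word n w)" id] r(1,3) by simp
  qed
  assume w: "w \<in> Sn n"
  have "len n (inv (inv w)) \<le> len n (inv w)" by (rule le[OF Sn_inv[OF w]])
  with le[OF w] show ?thesis by (simp add: Sn_inv_inv[OF w])
qed

lemma inv_simple_comp:
  assumes "w \<in> Sn n" shows "inv (simple i \<circ> w) = inv w \<circ> simple i"
proof (rule inv_unique_comp)
  show "(simple i \<circ> w) \<circ> (inv w \<circ> simple i) = id"
    using Sn_inv_apply(1)[OF assms] by (simp add: fun_eq_iff)
  show "(inv w \<circ> simple i) \<circ> (simple i \<circ> w) = id"
    using Sn_inv_apply(2)[OF assms] by (simp add: fun_eq_iff)
qed

lemma len_simple_comp: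
  assumes "w \<in> Sn n" "1 \<le> i" "i < n"
  shows "len n (simple i \<circ> w) = len n (inv w \<circ> simple i)"
  using len_inv[of "simple i \<circ> w" n] Sn_simple_comp_iff[OF assms(2,3)] assms(1)
  by (simp add: inv_simple_comp[OF assms(1)])

lemma len_simple_comp_le:
  assumes "w \<in> Sn n" "1 \<le> i" "i < n" shows "len n (simple i \<circ> w) \<le> Suc (len n w)"
  using len_comp_simple_le[OF assms(2,3), of "inv w"]
  by (simp add: len_simple_comp[OF assms] len_inv[OF assms(1)])

lemma len_simple_comp_less_iff:
  assumes "w \<in> Sn n" "1 \<le> i" "i < n"
  shows "len n (simple i \<circ> w) < len n w \<longleftrightarrow> inv w (Suc i) < inv w i"
  using len_comp_simple_less_iff[OF Sn_inv[OF assms(1)] assms(2,3)]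
  by (simp add: len_simple_comp[OF assms] len_inv[OF assms(1)])

lemma len_simple_comp_neq:
  assumes "w \<in> Sn n" "1 \<le> i" "i < n" shows "len n (simple i \<circ> w) \<noteq> len n w"
proof -
  have "inv w i \<noteq> inv w (Suc i)"
    using Sn_inv_apply(1)[OF assms(1)] by (metis n_not_Suc_n)
  then consider "inv w i < inv w (Suc i)" | "inv w (Suc i) < inv w i" by linarith
  then show ?thesis
  proof cases
    case 1
    then show ?thesis
      using len_comp_simple_ascent[OF assms(2,3), of "inv w"]
      by (simp add: len_simple_comp[OF assms] len_inv[OF assms(1)])
  next
    case 2
    then show ?thesis
      using len_comp_simple_descent[OF assms(2,3), of "inv w"]
      by (simp add: len_simple_comp[OF assms] len_inv[OF assms(1)])
  qed
qed

lemma len_word_perm_comp_le: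
  "valid_word n ws \<Longrightarrow> v \<in> Sn n \<Longrightarrow> len n (word_perm ws \<circ> v) \<le> len n v + length ws"
proof (induction ws)
  case (Cons i ws)
  have s: "word_perm ws \<circ> v \<in> Sn n" using Cons.prems word_perm_in_Sn Sn_comp by simp
  have "len n (word_perm (i # ws) \<circ> v) = len n (simple i \<circ> (word_perm ws \<circ> v))"
    by (simp add: comp_assoc)
  also have "\<dots> \<le> Suc (len n (word_perm ws \<circ> v))"
    using len_simple_comp_le[OF s] Cons.prems by simp
  also have "\<dots> \<le> len n v + length (i # ws)"
    using Cons.IH Cons.prems by (simp add: comp_def)
  finally show ?case .
qed simp

section \<open>Left multiplication by a generator\<close>

definition lmul_s :: "nat \<Rightarrow> nat \<Rightarrow> hecke \<Rightarrow> hecke" where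
  "lmul_s n i h = (\<lambda>w. if len n (simple i \<circ> w) < len n w
      then (tvar - 1) * h w + h (simple i \<circ> w)
      else tvar * h (simple i \<circ> w))"

lemma Tb_in_Hn: "v \<in> Sn n \<Longrightarrow> in_Hn n (Tb v)"
  by (auto simp: in_Hn_def Tb_def)

lemma in_Hn_rmul_s: "in_Hn n h \<Longrightarrow> 1 \<le> i \<Longrightarrow> i < n \<Longrightarrow> in_Hn n (rmul_s n i h)"
  unfolding in_Hn_def rmul_s_def using Sn_comp_simple_iff by simp

lemma in_Hn_lmul_s: "in_Hn n h \<Longrightarrow> 1 \<le> i \<Longrightarrow> i < n \<Longrightarrow> in_Hn n (lmul_s n i h)"
  unfolding in_Hn_def lmul_s_def using Sn_simple_comp_iff by simp

lemma simple_comp_eq_comp_simple: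
  assumes w: "w \<in> Sn n" and ij: "{w j, w (Suc j)} = {i, Suc i}"
  shows "simple i \<circ> w = w \<circ> simple j"
proof
  fix x
  have c: "(w j = i \<and> w (Suc j) = Suc i) \<or> (w j = Suc i \<and> w (Suc j) = i)"
    using ij by (simp add: doubleton_eq_iff)
  show "(simple i \<circ> w) x = (w \<circ> simple j) x"
  proof (cases "x = j \<or> x = Suc j")
    case True then show ?thesis using c by (auto simp: simple_def)
  next
    case False
    then have "w x \<noteq> w j" "w x \<noteq> w (Suc j)" using Sn_inj[OF w] by (auto simp: inj_eq)
    then have "w x \<noteq> i" "w x \<noteq> Suc i" using c by auto
    then show ?thesis using False by (simp add: simple_def transpose_def)
  qed
qed

lemma simple_less_simple_iff:
  assumes "a \<noteq> b" "{a, b} \<noteq> {k, Suc k}"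
  shows "simple k a < simple k b \<longleftrightarrow> a < b"
proof -
  have "\<not> ((a = k \<and> b = Suc k) \<or> (a = Suc k \<and> b = k))"
    using assms(2) by (auto simp: doubleton_eq_iff)
  with assms(1) show ?thesis
    unfolding simple_def transpose_def
    by (cases "a = k"; cases "a = Suc k"; cases "b = k"; cases "b = Suc k") (simp_all, linarith+)
qed

lemma inv_comp_simple_apply:
  assumes w: "w \<in> Sn n" and j: "1 \<le> j" "j < n"
  shows "inv (w \<circ> simple j) x = simple j (inv w x)"
proof -
  have "inj (w \<circ> simple j)" using Sn_inj Sn_comp_simple_iff[OF j] w by blast
  moreover have "(w \<circ> simple j) (simple j (inv w x)) = x" using Sn_inv_apply(1)[OF w] by simp
  ultimately show ?thesis by (simp add: inv_f_eq)
qed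

lemma right_descent_simple_comp_iff:
  assumes w: "w \<in> Sn n" and i: "1 \<le> i" "i < n" and j: "1 \<le> j" "j < n"
    and ij: "{w j, w (Suc j)} \<noteq> {i, Suc i}"
  shows "len n (simple i \<circ> w \<circ> simple j) < len n (simple i \<circ> w) \<longleftrightarrow> len n (w \<circ> simple j) < len n w"
proof -
  have sw: "simple i \<circ> w \<in> Sn n" using Sn_simple_comp_iff[OF i] w by simp
  have ne: "w j \<noteq> w (Suc j)" using Sn_inj[OF w] by (simp add: inj_eq)
  have "len n (simple i \<circ> w \<circ> simple j) < len n (simple i \<circ> w)
      \<longleftrightarrow> simple i (w (Suc j)) < simple i (w j)"
    using len_comp_simple_less_iff[OF sw j] by simp
  also have "\<dots> \<longleftrightarrow> w (Suc j) < w j"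
    using simple_less_simple_iff[of "w (Suc j)" "w j" i] ne ij by (simp add: insert_commute)
  also have "\<dots> \<longleftrightarrow> len n (w \<circ> simple j) < len n w"
    using len_comp_simple_less_iff[OF w j] by simp
  finally show ?thesis .
qed

lemma left_descent_comp_simple_iff:
  assumes w: "w \<in> Sn n" and i: "1 \<le> i" "i < n" and j: "1 \<le> j" "j < n"
    and ij: "{w j, w (Suc j)} \<noteq> {i, Suc i}"
  shows "len n (simple i \<circ> w \<circ> simple j) < len n (w \<circ> simple j) \<longleftrightarrow> len n (simple i \<circ> w) < len n w"
proof -
  have wj: "w \<circ> simple j \<in> Sn n" using Sn_comp_simple_iff[OF j] w by simp
  have ne: "inv w (Suc i) \<noteq> inv w i"
    using Sn_inv_apply(1)[OF w] by (metis n_not_Suc_n)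
  have ji: "{inv w (Suc i), inv w i} \<noteq> {j, Suc j}"
    using ij Sn_inv_apply(1)[OF w, of i] Sn_inv_apply(1)[OF w, of "Suc i"]
    by (auto simp: doubleton_eq_iff)
  have "len n (simple i \<circ> w \<circ> simple j) < len n (w \<circ> simple j)
      \<longleftrightarrow> inv (w \<circ> simple j) (Suc i) < inv (w \<circ> simple j) i"
    using len_simple_comp_less_iff[OF wj i] by (simp add: comp_assoc)
  also have "\<dots> \<longleftrightarrow> simple j (inv w (Suc i)) < simple j (inv w i)"
    using inv_comp_simple_apply[OF w j] by simp
  also have "\<dots> \<longleftrightarrow> inv w (Suc i) < inv w i"
    by (rule simple_less_simple_iff[OF ne ji])
  also have "\<dots> \<longleftrightarrow> len n (simple i \<circ> w) < len n w"
    using len_simple_comp_less_iff[OF w i] by simp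
  finally show ?thesis .
qed

lemma lmul_rmul_commute_at_exceptional:
  assumes ij: "simple i \<circ> w = w \<circ> simple j" and neq: "len n (simple i \<circ> w) \<noteq> len n w"
  shows "lmul_s n i (rmul_s n j h) w = rmul_s n j (lmul_s n i h) w"
proof -
  have w: "simple i \<circ> w \<circ> simple j = w" "simple i \<circ> (simple i \<circ> w) = w"
    using ij by (simp_all add: fun_eq_iff)
  define d where "d = (len n (simple i \<circ> w) < len n w)"
  have "len n (simple i \<circ> w \<circ> simple j) < len n (simple i \<circ> w) \<longleftrightarrow> \<not> d"
    "len n (simple i \<circ> (simple i \<circ> w)) < len n (simple i \<circ> w) \<longleftrightarrow> \<not> d"
    "len n (w \<circ> simple j) < len n w \<longleftrightarrow> d"
    unfolding w d_def ij[symmetric] using neq by linarith+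
  then show ?thesis
    unfolding lmul_s_def rmul_s_def comp_assoc[symmetric] w ij[symmetric]
    by (cases d) (simp_all add: algebra_simps)
qed

lemma lmul_rmul_commute_at_generic:
  assumes "len n (simple i \<circ> w \<circ> simple j) < len n (simple i \<circ> w) \<longleftrightarrow> len n (w \<circ> simple j) < len n w"
    and "len n (simple i \<circ> w \<circ> simple j) < len n (w \<circ> simple j) \<longleftrightarrow> len n (simple i \<circ> w) < len n w"
  shows "lmul_s n i (rmul_s n j h) w = rmul_s n j (lmul_s n i h) w"
  using assms unfolding lmul_s_def rmul_s_def comp_assoc[symmetric]
  by (cases "len n (simple i \<circ> w) < len n w"; cases "len n (w \<circ> simple j) < len n w")
    (simp_all add: algebra_simps)

text \<open>Associativity \<open>T\<^sub>i (h T\<^sub>j) = (T\<^sub>i h) T\<^sub>j\<close>, checked coefficientwise.\<close>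
lemma lmul_rmul_commute:
  assumes h: "in_Hn n h" and i: "1 \<le> i" "i < n" and j: "1 \<le> j" "j < n"
  shows "lmul_s n i (rmul_s n j h) = rmul_s n j (lmul_s n i h)"
proof
  fix w
  show "lmul_s n i (rmul_s n j h) w = rmul_s n j (lmul_s n i h) w"
  proof (cases "w \<in> Sn n")
    case False
    then have "simple i \<circ> w \<notin> Sn n" "w \<circ> simple j \<notin> Sn n" "simple i \<circ> (w \<circ> simple j) \<notin> Sn n"
      using Sn_simple_comp_iff[OF i] Sn_comp_simple_iff[OF j] by auto
    then show ?thesis
      using h False unfolding in_Hn_def lmul_s_def rmul_s_def by (simp add: comp_assoc)
  next
    case w: True
    show ?thesis
    proof (cases "{w j, w (Suc j)} = {i, Suc i}")
      case True
      show ?thesis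
        by (rule lmul_rmul_commute_at_exceptional[OF simple_comp_eq_comp_simple[OF w True]
              len_simple_comp_neq[OF w i]])
    next
      case False
      show ?thesis
        by (rule lmul_rmul_commute_at_generic[OF right_descent_simple_comp_iff[OF w i j False]
              left_descent_comp_simple_iff[OF w i j False]])
    qed
  qed
qed

section \<open>The product on \<open>H\<^sub>n\<close>\<close>

lemma rmul_s_Tb_ascent:
  assumes v: "v \<in> Sn n" and i: "1 \<le> i" "i < n" and up: "v i < v (Suc i)"
  shows "rmul_s n i (Tb v) = Tb (v \<circ> simple i)"
proof
  fix w
  have l: "len n (v \<circ> simple i) = Suc (len n v)" using len_comp_simple_ascent[OF i up] .
  have vv: "v \<circ> simple i \<circ> simple i = v" by (simp add: fun_eq_iff)
  show "rmul_s n i (Tb v) w = Tb (v \<circ> simple i) w"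
  proof (cases "w = v \<circ> simple i")
    case True
    have "v \<circ> simple i \<noteq> v" using l by auto
    then show ?thesis unfolding rmul_s_def Tb_def True vv using l by simp
  next
    case False
    then have "w \<circ> simple i \<noteq> v" by (metis vv simple_comp_simple comp_assoc comp_id)
    then show ?thesis unfolding rmul_s_def Tb_def using False l by auto
  qed
qed

lemma lmul_s_Tb_ascent:
  assumes v: "v \<in> Sn n" and l: "len n (simple i \<circ> v) = Suc (len n v)"
  shows "lmul_s n i (Tb v) = Tb (simple i \<circ> v)"
proof
  fix w
  have vv: "simple i \<circ> (simple i \<circ> v) = v" by (simp add: fun_eq_iff)
  show "lmul_s n i (Tb v) w = Tb (simple i \<circ> v) w"
  proof (cases "w = simple i \<circ> v")
    case True
    have "simple i \<circ> v \<noteq> v" using l by auto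
    then show ?thesis unfolding lmul_s_def Tb_def True vv using l by simp
  next
    case False
    have "w = simple i \<circ> v" if "simple i \<circ> w = v"
    proof -
      have "simple i \<circ> (simple i \<circ> w) = simple i \<circ> v" using that by simp
      then show ?thesis by (simp add: fun_eq_iff)
    qed
    then have "simple i \<circ> w \<noteq> v" using False by blast
    then show ?thesis unfolding lmul_s_def Tb_def using False l by auto
  qed
qed

lemma fold_rmul_s_Tb:
  "valid_word n ws \<Longrightarrow> v \<in> Sn n \<Longrightarrow> len n (v \<circ> word_perm ws) = len n v + length ws
   \<Longrightarrow> fold (rmul_s n) ws (Tb v) = Tb (v \<circ> word_perm ws)"
proof (induction ws arbitrary: v)
  case Nil then show ?case by simp
next
  case (Cons i ws)
  have i: "1 \<le> i" "i < n" and vw: "valid_word n ws" using Cons.prems by auto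
  have e: "v \<circ> word_perm (i # ws) = (v \<circ> simple i) \<circ> word_perm ws" by (simp add: comp_assoc)
  have a: "len n ((v \<circ> simple i) \<circ> word_perm ws) \<le> len n (v \<circ> simple i) + length ws"
    using len_comp_word_perm_le[OF vw] .
  have b: "len n (v \<circ> simple i) \<le> Suc (len n v)" using len_comp_simple_le[OF i] .
  have c: "len n ((v \<circ> simple i) \<circ> word_perm ws) = len n v + Suc (length ws)"
    using Cons.prems(3) unfolding e by (simp add: comp_def)
  have lv: "len n (v \<circ> simple i) = Suc (len n v)" using a b c by linarith
  have up: "v i < v (Suc i)"
  proof (rule ccontr)
    assume "\<not> v i < v (Suc i)"
    moreover have "v i \<noteq> v (Suc i)" using Sn_inj[OF Cons.prems(2)] by (simp add: inj_eq)
    ultimately have "v (Suc i) < v i" by simp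
    from len_comp_simple_descent[OF i this] lv show False by simp
  qed
  have vs: "v \<circ> simple i \<in> Sn n" using Sn_comp_simple_iff[OF i] Cons.prems(2) by simp
  have "fold (rmul_s n) (i # ws) (Tb v) = fold (rmul_s n) ws (Tb (v \<circ> simple i))"
    using rmul_s_Tb_ascent[OF Cons.prems(2) i up] by simp
  also have "\<dots> = Tb ((v \<circ> simple i) \<circ> word_perm ws)"
    using Cons.IH[OF vw vs] c lv by (simp add: comp_def)
  finally show ?case unfolding e .
qed

lemma foldr_lmul_s_Tb:
  "valid_word n ws \<Longrightarrow> v \<in> Sn n \<Longrightarrow> len n (word_perm ws \<circ> v) = len n v + length ws
   \<Longrightarrow> foldr (lmul_s n) ws (Tb v) = Tb (word_perm ws \<circ> v)"
proof (induction ws)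
  case Nil then show ?case by simp
next
  case (Cons i ws)
  have i: "1 \<le> i" "i < n" and vw: "valid_word n ws" using Cons.prems by auto
  have s: "word_perm ws \<circ> v \<in> Sn n" using word_perm_in_Sn[OF vw] Cons.prems(2) Sn_comp by simp
  have e: "word_perm (i # ws) \<circ> v = simple i \<circ> (word_perm ws \<circ> v)" by (simp add: comp_assoc)
  have a: "len n (word_perm ws \<circ> v) \<le> len n v + length ws" using len_word_perm_comp_le[OF vw Cons.prems(2)] .
  have b: "len n (simple i \<circ> (word_perm ws \<circ> v)) \<le> Suc (len n (word_perm ws \<circ> v))"
    using len_simple_comp_le[OF s i] .
  have c: "len n (simple i \<circ> (word_perm ws \<circ> v)) = len n v + Suc (length ws)"
    using Cons.prems(3) unfolding e by (simp add: comp_def)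
  have l1: "len n (word_perm ws \<circ> v) = len n v + length ws" using a b c by linarith
  have l2: "len n (simple i \<circ> (word_perm ws \<circ> v)) = Suc (len n (word_perm ws \<circ> v))" using l1 c by linarith
  have "foldr (lmul_s n) (i # ws) (Tb v) = lmul_s n i (Tb (word_perm ws \<circ> v))"
    using Cons.IH[OF vw Cons.prems(2) l1] by (simp add: comp_def)
  also have "\<dots> = Tb (simple i \<circ> (word_perm ws \<circ> v))" by (rule lmul_s_Tb_ascent[OF s l2])
  finally show ?case unfolding e .
qed

lemma rmul_s_sum:
  "rmul_s n i (\<lambda>w. \<Sum>v\<in>S. c v * x v w) = (\<lambda>w. \<Sum>v\<in>S. c v * rmul_s n i (x v) w)"
  unfolding rmul_s_def
  by (auto simp: sum_distrib_left sum.distrib sum_subtractf algebra_simps fun_eq_iff)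

lemma lmul_s_sum:
  "lmul_s n i (\<lambda>w. \<Sum>v\<in>S. c v * x v w) = (\<lambda>w. \<Sum>v\<in>S. c v * lmul_s n i (x v) w)"
  unfolding lmul_s_def
  by (auto simp: sum_distrib_left sum.distrib sum_subtractf algebra_simps fun_eq_iff)

lemma fold_rmul_s_sum:
  "fold (rmul_s n) ws (\<lambda>w. \<Sum>v\<in>S. c v * x v w) = (\<lambda>w. \<Sum>v\<in>S. c v * fold (rmul_s n) ws (x v) w)"
proof (induction ws arbitrary: x)
  case Nil then show ?case by simp
next
  case (Cons i ws)
  show ?case using Cons.IH[of "\<lambda>v. rmul_s n i (x v)"] by (simp add: rmul_s_sum)
qed

lemma rmul_T_sum:
  "rmul_T n (\<lambda>w. \<Sum>v\<in>S. c v * x v w) u = (\<lambda>w. \<Sum>v\<in>S. c v * rmul_T n (x v) u w)"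
  unfolding rmul_T_def by (rule fold_rmul_s_sum)

lemma hmult_sum_left:
  "hmult n (\<lambda>w. \<Sum>v\<in>S. c v * x v w) g = (\<lambda>w. \<Sum>v\<in>S. c v * hmult n (x v) g w)"
  unfolding hmult_def rmul_T_sum
  by (auto simp: fun_eq_iff sum_distrib_left algebra_simps intro: sum.swap)

lemma hmult_sum_right:
  "hmult n h (\<lambda>w. \<Sum>v\<in>S. c v * x v w) = (\<lambda>w. \<Sum>v\<in>S. c v * hmult n h (x v) w)"
  unfolding hmult_def
  by (auto simp: fun_eq_iff sum_distrib_left sum_distrib_right algebra_simps intro: sum.swap)

lemma hmult_lincomb_right:
  "hmult n h (\<lambda>w. c1 * g1 w + c2 * g2 w) = (\<lambda>w. c1 * hmult n h g1 w + c2 * hmult n h g2 w)"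
  unfolding hmult_def
  by (auto simp: fun_eq_iff sum_distrib_left sum.distrib algebra_simps)

lemma rmul_s_lincomb:
  "rmul_s n i (\<lambda>w. c1 * g1 w + c2 * g2 w) = (\<lambda>w. c1 * rmul_s n i g1 w + c2 * rmul_s n i g2 w)"
  unfolding rmul_s_def by (auto simp: fun_eq_iff algebra_simps)

lemma fold_rmul_s_scale:
  "fold (rmul_s n) ws (\<lambda>w. c * x w) = (\<lambda>w. c * fold (rmul_s n) ws x w)"
proof (induction ws arbitrary: x)
  case Nil then show ?case by simp
next
  case (Cons i ws)
  have "rmul_s n i (\<lambda>w. c * x w) = (\<lambda>w. c * rmul_s n i x w)"
    unfolding rmul_s_def by (auto simp: fun_eq_iff algebra_simps)
  then show ?case using Cons.IH by simp
qed

lemma hmult_hsmult_left: "hmult n (hsmult c x) g = hsmult c (hmult n x g)"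
  unfolding hmult_def hsmult_def rmul_T_def fold_rmul_s_scale
  by (auto simp: fun_eq_iff sum_distrib_left algebra_simps)

lemma hmult_hsmult_right: "hmult n h (hsmult c g) = hsmult c (hmult n h g)"
  unfolding hmult_def hsmult_def
  by (auto simp: fun_eq_iff sum_distrib_left algebra_simps)

lemma sum_Tb_mult: "finite S \<Longrightarrow> (\<Sum>u'\<in>S. Tb u u' * f u') = (if u \<in> S then f u else 0)"
proof -
  have "\<And>u'. Tb u u' * f u' = (if u = u' then f u' else 0)" by (simp add: Tb_def)
  moreover assume "finite S"
  ultimately show ?thesis by (simp add: sum.delta)
qed

lemma sum_mult_Tb: "finite S \<Longrightarrow> (\<Sum>v\<in>S. f v * Tb v w) = (if w \<in> S then f w else 0)"
proof -
  have "\<And>v. f v * Tb v w = (if w = v then f v else 0)" by (simp add: Tb_def)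
  moreover assume "finite S"
  ultimately show ?thesis by (simp add: sum.delta)
qed

lemma reduced_word_id: "reduced_word n id = []"
  using reduced_word_spec(3)[OF Sn_id, of n] by simp

lemma reduced_word_simple:
  assumes i: "1 \<le> i" "i < n" shows "reduced_word n (simple i) = [i]"
proof -
  have l: "len n (simple i) = 1" by (rule len_simple[OF i])
  note r = reduced_word_spec[OF simple_in_Sn[OF i]]
  obtain j where j: "reduced_word n (simple i) = [j]" using r(3) l
    by (cases "reduced_word n (simple i)") auto
  then have "simple j = simple i" using r(2) by simp
  then have "simple j j = simple i j" by simp
  then have "j = i" unfolding simple_def transpose_def by (auto split: if_splits)
  then show ?thesis using j by simp
qed

lemma hmult_Tb_right: "u \<in> Sn n \<Longrightarrow> hmult n h (Tb u) = rmul_T n h u"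
  unfolding hmult_def by (simp add: sum_Tb_mult)

lemma hmult_hone_right: "hmult n h hone = h"
  unfolding hone_def by (simp add: hmult_Tb_right rmul_T_def reduced_word_id)

lemma hmult_Tb_simple: "1 \<le> i \<Longrightarrow> i < n \<Longrightarrow> hmult n h (Tb (simple i)) = rmul_s n i h"
  by (simp add: hmult_Tb_right simple_in_Sn rmul_T_def reduced_word_simple)

lemma rmul_T_hone: "u \<in> Sn n \<Longrightarrow> rmul_T n hone u = Tb u"
proof -
  assume u: "u \<in> Sn n"
  note r = reduced_word_spec[OF u]
  have "fold (rmul_s n) (reduced_word n u) (Tb id) = Tb (id \<circ> word_perm (reduced_word n u))"
    by (rule fold_rmul_s_Tb[OF r(1) Sn_id]) (simp add: r)
  then show ?thesis unfolding rmul_T_def hone_def r(2) by simp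
qed

lemma in_Hn_fold_rmul_s: "valid_word n ws \<Longrightarrow> in_Hn n h \<Longrightarrow> in_Hn n (fold (rmul_s n) ws h)"
proof (induction ws arbitrary: h)
  case (Cons i ws)
  then have "in_Hn n (rmul_s n i h)" using in_Hn_rmul_s by simp
  then show ?case using Cons by simp
qed simp

lemma in_Hn_foldr_lmul_s: "valid_word n ws \<Longrightarrow> in_Hn n h \<Longrightarrow> in_Hn n (foldr (lmul_s n) ws h)"
  by (induction ws) (auto intro: in_Hn_lmul_s)

lemma in_Hn_rmul_T: "u \<in> Sn n \<Longrightarrow> in_Hn n h \<Longrightarrow> in_Hn n (rmul_T n h u)"
  unfolding rmul_T_def by (rule in_Hn_fold_rmul_s[OF reduced_word_spec(1)])

lemma in_Hn_hmult: "in_Hn n h \<Longrightarrow> in_Hn n (hmult n h g)"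
  unfolding hmult_def using in_Hn_rmul_T unfolding in_Hn_def by simp

lemma in_Hn_hone[simp]: "in_Hn n hone"
  unfolding hone_def by (rule Tb_in_Hn[OF Sn_id])

lemma hmult_hone_left: "in_Hn n g \<Longrightarrow> hmult n hone g = g"
proof (rule ext)
  fix w assume g: "in_Hn n g"
  have "hmult n hone g w = (\<Sum>u\<in>Sn n. g u * Tb u w)"
    unfolding hmult_def by (rule sum.cong) (simp_all add: rmul_T_hone)
  also have "\<dots> = g w" using g unfolding in_Hn_def by (simp add: sum_mult_Tb)
  finally show "hmult n hone g w = g w" .
qed

lemma fold_rmul_s_lmul_s:
  "valid_word n ws \<Longrightarrow> in_Hn n h \<Longrightarrow> 1 \<le> i \<Longrightarrow> i < n
   \<Longrightarrow> fold (rmul_s n) ws (lmul_s n i h) = lmul_s n i (fold (rmul_s n) ws h)"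
proof (induction ws arbitrary: h)
  case Nil then show ?case by simp
next
  case (Cons j ws)
  have "fold (rmul_s n) (j # ws) (lmul_s n i h) = fold (rmul_s n) ws (lmul_s n i (rmul_s n j h))"
    using lmul_rmul_commute[OF Cons.prems(2) Cons.prems(3,4), of j] Cons.prems(1) by simp
  also have "\<dots> = lmul_s n i (fold (rmul_s n) ws (rmul_s n j h))"
    using Cons.IH[of "rmul_s n j h"] Cons.prems in_Hn_rmul_s by simp
  finally show ?case by simp
qed

lemma hmult_lmul_s:
  assumes "in_Hn n h" "1 \<le> i" "i < n"
  shows "hmult n (lmul_s n i h) g = lmul_s n i (hmult n h g)"
proof -
  have "\<And>u. u \<in> Sn n \<Longrightarrow> rmul_T n (lmul_s n i h) u = lmul_s n i (rmul_T n h u)"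
    unfolding rmul_T_def using fold_rmul_s_lmul_s[OF reduced_word_spec(1) assms] by simp
  then have "hmult n (lmul_s n i h) g = (\<lambda>w. \<Sum>u\<in>Sn n. g u * lmul_s n i (rmul_T n h u) w)"
    unfolding hmult_def by simp
  also have "\<dots> = lmul_s n i (hmult n h g)"
    unfolding hmult_def lmul_s_sum ..
  finally show ?thesis .
qed

lemma hmult_foldr_lmul_s:
  "valid_word n ws \<Longrightarrow> in_Hn n h \<Longrightarrow> hmult n (foldr (lmul_s n) ws h) g = foldr (lmul_s n) ws (hmult n h g)"
proof (induction ws)
  case Nil then show ?case by simp
next
  case (Cons i ws)
  have "in_Hn n (foldr (lmul_s n) ws h)" using in_Hn_foldr_lmul_s Cons.prems by simp
  then show ?case using hmult_lmul_s[of n "foldr (lmul_s n) ws h" i g] Cons by simp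
qed

lemma Tb_eq_foldr_lmul_s: "v \<in> Sn n \<Longrightarrow> Tb v = foldr (lmul_s n) (reduced_word n v) hone"
proof -
  assume v: "v \<in> Sn n"
  note r = reduced_word_spec[OF v]
  have "foldr (lmul_s n) (reduced_word n v) (Tb id) = Tb (word_perm (reduced_word n v) \<circ> id)"
    by (rule foldr_lmul_s_Tb[OF r(1) Sn_id]) (simp add: r)
  then show ?thesis unfolding hone_def r(2) by simp
qed

lemma in_Hn_expansion: "in_Hn n h \<Longrightarrow> h = (\<lambda>w. \<Sum>v\<in>Sn n. h v * Tb v w)"
  unfolding in_Hn_def by (auto simp: sum_mult_Tb)

text \<open>Writing \<open>T\<^sub>v\<close> as iterated left multiplications by generators reduces associativity to
  \<open>lmul_rmul_commute\<close>.\<close>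
lemma hmult_assoc:
  assumes h: "in_Hn n h" and g: "in_Hn n g" and k: "in_Hn n k"
  shows "hmult n (hmult n h g) k = hmult n h (hmult n g k)"
proof -
  have gk: "in_Hn n (hmult n g k)" using in_Hn_hmult[OF g] .
  have key: "hmult n (hmult n (Tb v) g) k = hmult n (Tb v) (hmult n g k)" if v: "v \<in> Sn n" for v
  proof -
    let ?ws = "reduced_word n v"
    have vw: "valid_word n ?ws" using reduced_word_spec(1)[OF v] .
    have "hmult n (hmult n (Tb v) g) k = hmult n (foldr (lmul_s n) ?ws g) k"
      unfolding Tb_eq_foldr_lmul_s[OF v] hmult_foldr_lmul_s[OF vw in_Hn_hone] hmult_hone_left[OF g] ..
    also have "\<dots> = foldr (lmul_s n) ?ws (hmult n g k)" by (rule hmult_foldr_lmul_s[OF vw g])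
    also have "\<dots> = hmult n (Tb v) (hmult n g k)"
      unfolding Tb_eq_foldr_lmul_s[OF v] hmult_foldr_lmul_s[OF vw in_Hn_hone] hmult_hone_left[OF gk] ..
    finally show ?thesis .
  qed
  have "hmult n (hmult n h g) k = hmult n (hmult n (\<lambda>w. \<Sum>v\<in>Sn n. h v * Tb v w) g) k"
    using in_Hn_expansion[OF h] by simp
  also have "\<dots> = (\<lambda>w. \<Sum>v\<in>Sn n. h v * hmult n (hmult n (Tb v) g) k w)"
    unfolding hmult_sum_left ..
  also have "\<dots> = (\<lambda>w. \<Sum>v\<in>Sn n. h v * hmult n (Tb v) (hmult n g k) w)"
    using key by simp
  also have "\<dots> = hmult n (\<lambda>w. \<Sum>v\<in>Sn n. h v * Tb v w) (hmult n g k)"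
    unfolding hmult_sum_left ..
  also have "\<dots> = hmult n h (hmult n g k)" using in_Hn_expansion[OF h] by simp
  finally show ?thesis .
qed


section \<open>Inverting \<open>T\<^sub>u\<close>\<close>

text \<open>\<open>tTinv i = T_i + 1 - t = t T_i^-1\<close>, by the quadratic relation.\<close>
definition tTinv :: "nat \<Rightarrow> hecke" where
  "tTinv i = (\<lambda>w. Tb (simple i) w + (1 - tvar) * hone w)"

definition T_word :: "nat \<Rightarrow> nat list \<Rightarrow> hecke" where
  "T_word n ws = fold (\<lambda>i x. hmult n x (Tb (simple i))) ws hone"

definition tTinv_word :: "nat \<Rightarrow> nat list \<Rightarrow> hecke" where
  "tTinv_word n ws = fold (\<lambda>i x. hmult n x (tTinv i)) ws hone"

lemma tinv_mult_tvar: "tinv * tvar = 1" "tvar * tinv = 1"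
  unfolding tvar_def tinv_def by (simp_all add: mult_single)

lemma tinv_pow_mult_tvar_pow: "tinv ^ m * tvar ^ m = 1" "tvar ^ m * tinv ^ m = 1"
  by (simp_all add: power_mult_distrib[symmetric] tinv_mult_tvar)

lemma hsmult_hsmult: "hsmult c (hsmult d x) = hsmult (c * d) x"
  by (simp add: hsmult_def fun_eq_iff mult.assoc)

lemma hsmult_one [simp]: "hsmult 1 x = x"
  by (simp add: hsmult_def)

lemma in_Hn_hsmult: "in_Hn n x \<Longrightarrow> in_Hn n (hsmult c x)"
  by (simp add: in_Hn_def hsmult_def)

lemma in_Hn_tTinv: "1 \<le> i \<Longrightarrow> i < n \<Longrightarrow> in_Hn n (tTinv i)"
  using Tb_in_Hn[OF simple_in_Sn] in_Hn_hone unfolding in_Hn_def tTinv_def hone_def by simp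

lemma Tb_simple_square:
  assumes i: "1 \<le> i" "i < n"
  shows "hmult n (Tb (simple i)) (Tb (simple i)) = (\<lambda>w. (tvar - 1) * Tb (simple i) w + tvar * hone w)"
proof (rule ext)
  fix w
  have l: "len n (simple i) = 1" using len_simple[OF i] .
  have sid: "simple i \<noteq> id"
  proof
    assume "simple i = id" then have "simple i i = i" by simp
    then show False by (simp add: simple_def)
  qed
  have e: "(w \<circ> simple i = simple i) \<longleftrightarrow> w = id"
  proof
    assume "w \<circ> simple i = simple i"
    then have "w \<circ> simple i \<circ> simple i = simple i \<circ> simple i" by simp
    then show "w = id" by (simp add: comp_assoc)
  qed simp
  show "hmult n (Tb (simple i)) (Tb (simple i)) w = (tvar - 1) * Tb (simple i) w + tvar * hone w"
    unfolding hmult_Tb_simple[OF i]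
  proof (cases "w = simple i")
    case True
    then show "rmul_s n i (Tb (simple i)) w = (tvar - 1) * Tb (simple i) w + tvar * hone w"
      unfolding rmul_s_def Tb_def hone_def using l sid e by simp
  next
    case False
    show "rmul_s n i (Tb (simple i)) w = (tvar - 1) * Tb (simple i) w + tvar * hone w"
    proof (cases "w = id")
      case True
      then show ?thesis unfolding rmul_s_def Tb_def hone_def using l sid by simp
    next
      case False
      then show ?thesis unfolding rmul_s_def Tb_def hone_def using \<open>w \<noteq> simple i\<close> e by simp
    qed
  qed
qed

lemma Tb_simple_tTinv:
  assumes i: "1 \<le> i" "i < n"
  shows "hmult n (Tb (simple i)) (tTinv i) = hsmult tvar hone"
proof -
  have "tTinv i = (\<lambda>w. 1 * Tb (simple i) w + (1 - tvar) * hone w)" unfolding tTinv_def by simp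
  then have "hmult n (Tb (simple i)) (tTinv i)
     = (\<lambda>w. 1 * hmult n (Tb (simple i)) (Tb (simple i)) w + (1 - tvar) * hmult n (Tb (simple i)) hone w)"
    using hmult_lincomb_right[of n "Tb (simple i)" 1 "Tb (simple i)" "1 - tvar" hone] by simp
  also have "\<dots> = hsmult tvar hone"
    unfolding Tb_simple_square[OF i] hmult_hone_right hsmult_def by (simp add: fun_eq_iff algebra_simps)
  finally show ?thesis .
qed

lemma tTinv_Tb_simple:
  assumes i: "1 \<le> i" "i < n"
  shows "hmult n (tTinv i) (Tb (simple i)) = hsmult tvar hone"
proof -
  have "tTinv i = (\<lambda>w. 1 * Tb (simple i) w + (1 - tvar) * hone w)" unfolding tTinv_def by simp
  then have "hmult n (tTinv i) (Tb (simple i)) = rmul_s n i (\<lambda>w. 1 * Tb (simple i) w + (1 - tvar) * hone w)"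
    using hmult_Tb_simple[OF i] by simp
  also have "\<dots> = (\<lambda>w. 1 * rmul_s n i (Tb (simple i)) w + (1 - tvar) * rmul_s n i hone w)"
    by (rule rmul_s_lincomb)
  also have "rmul_s n i hone = Tb (simple i)"
    unfolding hone_def using rmul_s_Tb_ascent[OF Sn_id i] by simp
  also have "rmul_s n i (Tb (simple i)) = hmult n (Tb (simple i)) (Tb (simple i))"
    using hmult_Tb_simple[OF i] by simp
  finally show ?thesis
    unfolding Tb_simple_square[OF i] hsmult_def by (simp add: fun_eq_iff algebra_simps)
qed

lemma in_Hn_fold_hmult: "in_Hn n z \<Longrightarrow> in_Hn n (fold (\<lambda>i x. hmult n x (Y i)) ws z)"
  by (induction ws arbitrary: z) (auto intro: in_Hn_hmult)

lemma fold_hmult_extract: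
  assumes Y: "\<And>i. i \<in> set ws \<Longrightarrow> in_Hn n (Y i)" and x: "in_Hn n x"
  shows "fold (\<lambda>i x. hmult n x (Y i)) ws x = hmult n x (fold (\<lambda>i x. hmult n x (Y i)) ws hone)"
  using Y x
proof (induction ws arbitrary: x)
  case Nil then show ?case by (simp add: hmult_hone_right)
next
  case (Cons i ws)
  have Yi: "in_Hn n (Y i)" using Cons.prems by simp
  have Y': "\<And>j. j \<in> set ws \<Longrightarrow> in_Hn n (Y j)" using Cons.prems by simp
  have F: "in_Hn n (fold (\<lambda>i x. hmult n x (Y i)) ws hone)"
    by (rule in_Hn_fold_hmult) simp
  have "fold (\<lambda>i x. hmult n x (Y i)) (i # ws) x = hmult n (hmult n x (Y i)) (fold (\<lambda>i x. hmult n x (Y i)) ws hone)"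
    using Cons.IH[OF Y' in_Hn_hmult[OF Cons.prems(2)]] by simp
  also have "\<dots> = hmult n x (hmult n (Y i) (fold (\<lambda>i x. hmult n x (Y i)) ws hone))"
    by (rule hmult_assoc[OF Cons.prems(2) Yi F])
  also have "\<dots> = hmult n x (fold (\<lambda>i x. hmult n x (Y i)) (i # ws) hone)"
    using Cons.IH[OF Y' Yi] by (simp add: hmult_hone_left[OF Yi])
  finally show ?case .
qed

lemma in_Hn_T_word: "in_Hn n (T_word n ws)"
  unfolding T_word_def by (rule in_Hn_fold_hmult) simp

lemma in_Hn_tTinv_word: "in_Hn n (tTinv_word n ws)"
  unfolding tTinv_word_def by (rule in_Hn_fold_hmult) simp

lemma T_word_snoc: "T_word n (ws @ [i]) = hmult n (T_word n ws) (Tb (simple i))"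
  unfolding T_word_def by simp

lemma tTinv_word_snoc: "tTinv_word n (ws @ [i]) = hmult n (tTinv_word n ws) (tTinv i)"
  unfolding tTinv_word_def by simp

lemma T_word_Cons: "valid_word n ws \<Longrightarrow> 1 \<le> i \<Longrightarrow> i < n \<Longrightarrow> T_word n (i # ws) = hmult n (Tb (simple i)) (T_word n ws)"
proof -
  assume vw: "valid_word n ws" and i: "1 \<le> i" "i < n"
  have T: "in_Hn n (Tb (simple i))" using Tb_in_Hn[OF simple_in_Sn[OF i]] .
  have Y: "\<And>j. j \<in> set ws \<Longrightarrow> in_Hn n (Tb (simple j))"
    using vw Tb_in_Hn[OF simple_in_Sn] unfolding valid_word_def by blast
  have "T_word n (i # ws) = fold (\<lambda>i x. hmult n x (Tb (simple i))) ws (Tb (simple i))"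
    unfolding T_word_def using hmult_hone_left[OF T] by simp
  also have "\<dots> = hmult n (Tb (simple i)) (T_word n ws)"
    unfolding T_word_def by (rule fold_hmult_extract[OF Y T])
  finally show ?thesis .
qed

lemma T_word_rev_tTinv_word:
  "valid_word n ws \<Longrightarrow> hmult n (T_word n (rev ws)) (tTinv_word n ws) = hsmult (tvar ^ length ws) hone"
proof (induction ws rule: rev_induct)
  case Nil then show ?case unfolding T_word_def tTinv_word_def by (simp add: hmult_hone_left)
next
  case (snoc i ws)
  have i: "1 \<le> i" "i < n" and vw: "valid_word n ws" using snoc.prems by auto
  let ?T = "Tb (simple i)" and ?P = "T_word n (rev ws)" and ?Q = "tTinv_word n ws"
  have T: "in_Hn n ?T" using Tb_in_Hn[OF simple_in_Sn[OF i]] .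
  have A: "in_Hn n (tTinv i)" using in_Hn_tTinv[OF i] .
  have "hmult n (T_word n (rev (ws @ [i]))) (tTinv_word n (ws @ [i])) = hmult n (hmult n ?T ?P) (hmult n ?Q (tTinv i))"
    using T_word_Cons[of n "rev ws" i] vw i by (simp add: tTinv_word_snoc)
  also have "\<dots> = hmult n ?T (hmult n (hmult n ?P ?Q) (tTinv i))"
    by (simp add: hmult_assoc T in_Hn_T_word in_Hn_tTinv_word A in_Hn_hmult)
  also have "\<dots> = hmult n ?T (hsmult (tvar ^ length ws) (tTinv i))"
    using snoc.IH[OF vw] by (simp add: hmult_hsmult_left hmult_hone_left[OF A])
  also have "\<dots> = hsmult (tvar ^ length (ws @ [i])) hone"
    by (simp add: hmult_hsmult_right Tb_simple_tTinv[OF i] hsmult_hsmult mult.commute)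
  finally show ?case .
qed

lemma tTinv_word_T_word_rev:
  "valid_word n ws \<Longrightarrow> hmult n (tTinv_word n ws) (T_word n (rev ws)) = hsmult (tvar ^ length ws) hone"
proof (induction ws rule: rev_induct)
  case Nil then show ?case unfolding T_word_def tTinv_word_def by (simp add: hmult_hone_left)
next
  case (snoc i ws)
  have i: "1 \<le> i" "i < n" and vw: "valid_word n ws" using snoc.prems by auto
  let ?T = "Tb (simple i)" and ?P = "T_word n (rev ws)" and ?Q = "tTinv_word n ws"
  have T: "in_Hn n ?T" using Tb_in_Hn[OF simple_in_Sn[OF i]] .
  have A: "in_Hn n (tTinv i)" using in_Hn_tTinv[OF i] .
  have "hmult n (tTinv_word n (ws @ [i])) (T_word n (rev (ws @ [i]))) = hmult n (hmult n ?Q (tTinv i)) (hmult n ?T ?P)"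
    using T_word_Cons[of n "rev ws" i] vw i by (simp add: tTinv_word_snoc)
  also have "\<dots> = hmult n ?Q (hmult n (hmult n (tTinv i) ?T) ?P)"
    by (simp add: hmult_assoc T in_Hn_T_word in_Hn_tTinv_word A in_Hn_hmult)
  also have "\<dots> = hmult n ?Q (hsmult tvar ?P)"
    by (simp add: tTinv_Tb_simple[OF i] hmult_hsmult_left hmult_hone_left[OF in_Hn_T_word])
  also have "\<dots> = hsmult (tvar ^ length (ws @ [i])) hone"
    using snoc.IH[OF vw] by (simp add: hmult_hsmult_right hsmult_hsmult)
  finally show ?case .
qed

lemma fold_hmult_Tb_simple:
  "valid_word n ws \<Longrightarrow> fold (\<lambda>i x. hmult n x (Tb (simple i))) ws x = fold (rmul_s n) ws x"
  by (induction ws arbitrary: x) (simp_all add: hmult_Tb_simple)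

lemma T_word_reduced:
  assumes "valid_word n ws" "len n (word_perm ws) = length ws"
  shows "T_word n ws = Tb (word_perm ws)"
proof -
  have "T_word n ws = fold (rmul_s n) ws (Tb id)"
    unfolding T_word_def fold_hmult_Tb_simple[OF assms(1)] hone_def ..
  also have "\<dots> = Tb (id \<circ> word_perm ws)"
    by (rule fold_rmul_s_Tb[OF assms(1) Sn_id]) (simp add: assms)
  finally show ?thesis by simp
qed

lemma T_word_rev_reduced_word:
  assumes u: "u \<in> Sn n"
  shows "T_word n (rev (reduced_word n u)) = Tb (inv u)"
proof -
  note r = reduced_word_spec[OF u]
  have "word_perm (rev (reduced_word n u)) = inv u" using word_perm_rev r(2) by simp
  moreover have "len n (inv u) = length (rev (reduced_word n u))" using len_inv[OF u] r(3) by simp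
  ultimately show ?thesis using T_word_reduced[of n "rev (reduced_word n u)"] r(1) by simp
qed

lemma Tb_inv_inverse:
  assumes u: "u \<in> Sn n"
  defines "Z \<equiv> hsmult (tinv ^ len n u) (tTinv_word n (reduced_word n u))"
  shows "in_Hn n Z" "hmult n (Tb (inv u)) Z = hone" "hmult n Z (Tb (inv u)) = hone"
proof -
  note r = reduced_word_spec[OF u]
  show "in_Hn n Z" unfolding Z_def by (rule in_Hn_hsmult[OF in_Hn_tTinv_word])
  show "hmult n (Tb (inv u)) Z = hone"
    unfolding Z_def T_word_rev_reduced_word[OF u, symmetric] hmult_hsmult_right T_word_rev_tTinv_word[OF r(1)] r(3) hsmult_hsmult tinv_pow_mult_tvar_pow
    by simp
  show "hmult n Z (Tb (inv u)) = hone"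
    unfolding Z_def T_word_rev_reduced_word[OF u, symmetric] hmult_hsmult_left tTinv_word_T_word_rev[OF r(1)] r(3) hsmult_hsmult tinv_pow_mult_tvar_pow
    by simp
qed

lemma hinverse_Tb_inv:
  assumes u: "u \<in> Sn n"
  shows "hinverse n (Tb (inv u)) = hsmult (tinv ^ len n u) (tTinv_word n (reduced_word n u))"
proof -
  let ?Z = "hsmult (tinv ^ len n u) (tTinv_word n (reduced_word n u))"
  let ?T = "Tb (inv u)"
  note Z = Tb_inv_inverse[OF u]
  have T: "in_Hn n ?T" by (rule Tb_in_Hn[OF Sn_inv[OF u]])
  show ?thesis unfolding hinverse_def
  proof (rule the_equality)
    show "in_Hn n ?Z \<and> hmult n ?T ?Z = hone \<and> hmult n ?Z ?T = hone" using Z by simp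
  next
    fix y assume y: "in_Hn n y \<and> hmult n ?T y = hone \<and> hmult n y ?T = hone"
    have "y = hmult n y (hmult n ?T ?Z)" using Z(2) by (simp add: hmult_hone_right)
    also have "\<dots> = hmult n (hmult n y ?T) ?Z" using hmult_assoc[OF _ T Z(1), of y] y by simp
    also have "\<dots> = ?Z" using y Z(1) by (simp add: hmult_hone_left)
    finally show "y = ?Z" .
  qed
qed


section \<open>Supports of products with parabolic elements\<close>

lemma rmul_s_nonzero: "rmul_s n i x w \<noteq> 0 \<Longrightarrow> x w \<noteq> 0 \<or> x (w \<circ> simple i) \<noteq> 0"
  unfolding rmul_s_def by (auto split: if_splits)

lemma fold_rmul_s_support:
  assumes "valid_word n ws" "c \<notin> set ws" "fold (rmul_s n) ws x w \<noteq> 0"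
  shows "\<exists>z. x z \<noteq> 0 \<and> z ` {1..c} = w ` {1..c}"
  using assms
proof (induction ws arbitrary: x)
  case (Cons i ws)
  from Cons.IH[of "rmul_s n i x"] Cons.prems obtain z
    where z: "rmul_s n i x z \<noteq> 0" "z ` {1..c} = w ` {1..c}"
    by auto
  have img: "(z \<circ> simple i) ` {1..c} = w ` {1..c}"
    using Cons.prems z(2) comp_simple_image_atLeastAtMost[of i c z] by auto
  from rmul_s_nonzero[OF z(1)] show ?case
  proof
    assume "x z \<noteq> 0"
    with z(2) show ?case by blast
  next
    assume "x (z \<circ> simple i) \<noteq> 0"
    with img show ?case by blast
  qed
qed auto

lemma hmult_T_word:
  "valid_word n xs \<Longrightarrow> in_Hn n Z \<Longrightarrow> hmult n Z (T_word n xs) = fold (rmul_s n) xs Z"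
proof (induction xs rule: rev_induct)
  case Nil then show ?case unfolding T_word_def by (simp add: hmult_hone_right)
next
  case (snoc i xs)
  have i: "1 \<le> i" "i < n" and vx: "valid_word n xs" using snoc.prems by auto
  have "hmult n Z (T_word n (xs @ [i])) = hmult n (hmult n Z (T_word n xs)) (Tb (simple i))"
    unfolding T_word_snoc
    by (rule hmult_assoc[symmetric, OF snoc.prems(2) in_Hn_T_word Tb_in_Hn[OF simple_in_Sn[OF i]]])
  also have "\<dots> = rmul_s n i (fold (rmul_s n) xs Z)"
    using snoc.IH[OF vx snoc.prems(2)] hmult_Tb_simple[OF i] by simp
  finally show ?case by simp
qed

lemma stab_varpi_image:
  assumes "x \<in> stab n (varpi c)"
  shows "x \<in> Sn n" "x ` {1..c} = {1..c}"
proof -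
  show x: "x \<in> Sn n" using assms by (simp add: stab_def)
  have "perm_act x (varpi c) = varpi c" using assms by (simp add: stab_def)
  then have eq: "varpi c (inv x y) = varpi c y" for y unfolding perm_act_def by metis
  have iff: "inv x y \<in> {1..c} \<longleftrightarrow> y \<in> {1..c}" for y
    using eq[of y] unfolding varpi_def by (auto split: if_splits)
  show "x ` {1..c} = {1..c}"
  proof
    show "x ` {1..c} \<subseteq> {1..c}"
    proof
      fix y assume "y \<in> x ` {1..c}"
      then obtain z where z: "z \<in> {1..c}" "y = x z" by blast
      then show "y \<in> {1..c}" using iff[of "x z"] Sn_inv_apply(2)[OF x] by simp
    qed
    show "{1..c} \<subseteq> x ` {1..c}"
    proof
      fix y assume "y \<in> {1..c}"
      then have "inv x y \<in> {1..c}" using iff by simp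
      then show "y \<in> x ` {1..c}" using Sn_inv_apply(1)[OF x] by (metis image_eqI)
    qed
  qed
qed

lemma in_Hpar_in_Hn: "in_Hpar n mu h \<Longrightarrow> in_Hn n h"
  unfolding in_Hpar_def in_Hn_def stab_def by auto

text \<open>Right multiplication by the parabolic subalgebra only moves coefficients inside the cosets
  \<open>w S\<^sub>n\<^sub>,\<^sub>\<lambda>\<close>, which are determined by \<open>w ` {1..c}\<close>, because elements of the stabilizer have reduced
  words avoiding \<open>s\<^sub>c\<close>.\<close>
lemma hmult_in_Hpar_support:
  assumes Z: "in_Hn n Z" and h: "in_Hpar n (varpi c) h" and nz: "hmult n Z h w \<noteq> 0"
  shows "\<exists>z. Z z \<noteq> 0 \<and> z ` {1..c} = w ` {1..c}"
proof -
  have "hmult n Z h = (\<lambda>w. \<Sum>x\<in>Sn n. h x * hmult n Z (Tb x) w)"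
    by (subst in_Hn_expansion[OF in_Hpar_in_Hn[OF h]]) (rule hmult_sum_right)
  with nz have "(\<Sum>x\<in>Sn n. h x * hmult n Z (Tb x) w) \<noteq> 0" by simp
  then obtain x where "h x * hmult n Z (Tb x) w \<noteq> 0"
    by (rule sum.not_neutral_contains_not_neutral)
  then have hx: "h x \<noteq> 0" and hz: "hmult n Z (Tb x) w \<noteq> 0" by auto
  have "x \<in> stab n (varpi c)" using hx h unfolding in_Hpar_def by blast
  from reduced_word_exists_avoiding[OF stab_varpi_image[OF this]] obtain xs
    where xs: "valid_word n xs" "c \<notin> set xs" "word_perm xs = x" "length xs = len n x"
    by blast
  have "Tb x = T_word n xs" using T_word_reduced[OF xs(1)] xs(3,4) by simp
  then have "fold (rmul_s n) xs Z w \<noteq> 0" using hz hmult_T_word[OF xs(1) Z] by simp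
  then show ?thesis by (rule fold_rmul_s_support[OF xs(1,2)])
qed

section \<open>The tableau order and the support of scaled inverses\<close>

text \<open>The tableau criterion for the Bruhat order: \<open>v \<le> p\<close> iff for every \<open>k\<close> the sorted values of
  \<open>v\<close> on \<open>{1..k}\<close> are entrywise at most those of \<open>p\<close>.  Only one direction of the Bruhat theory is
  needed here: the support of \<open>t^l(u) (T_(u^-1))^-1\<close> lies below \<open>u\<close> in this order.\<close>
definition tableau_le :: "(nat \<Rightarrow> nat) \<Rightarrow> (nat \<Rightarrow> nat) \<Rightarrow> bool" where
  "tableau_le v p \<longleftrightarrow> (\<forall>k m. card {j \<in> {1..k}. p j \<le> m} \<le> card {j \<in> {1..k}. v j \<le> m})"

lemma tableau_le_refl: "tableau_le p p"
  by (simp add: tableau_le_def)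

lemma card_filter_atLeastAtMost_Suc:
  "card {j \<in> {1..Suc k}. P j} = card {j \<in> {1..k}. P j} + (if P (Suc k) then 1 else 0)"
proof -
  have fin: "finite {j \<in> {1..k}. P j}" by simp
  have "{j \<in> {1..Suc k}. P j}
      = (if P (Suc k) then insert (Suc k) {j \<in> {1..k}. P j} else {j \<in> {1..k}. P j})"
    by (auto simp: le_Suc_eq)
  then show ?thesis using fin by simp
qed

lemma card_filter_comp_simple:
  assumes "1 \<le> i" "i \<noteq> k"
  shows "card {j \<in> {1..k}. (q \<circ> simple i) j \<le> m} = card {j \<in> {1..k}. q j \<le> m}"
proof -
  have "{j \<in> {1..k}. (q \<circ> simple i) j \<le> m} = simple i ` {j \<in> {1..k}. q j \<le> m}"
  proof (intro equalityI subsetI)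
    fix j assume "j \<in> {j \<in> {1..k}. (q \<circ> simple i) j \<le> m}"
    then have "simple i j \<in> {j \<in> {1..k}. q j \<le> m}"
      using simple_mem_atLeastAtMost_iff[OF assms, of j] by simp
    then show "j \<in> simple i ` {j \<in> {1..k}. q j \<le> m}"
      using image_eqI[of j "simple i" "simple i j"] by simp
  next
    fix j assume "j \<in> simple i ` {j \<in> {1..k}. q j \<le> m}"
    then obtain l where "l \<in> {j \<in> {1..k}. q j \<le> m}" "j = simple i l" by blast
    then show "j \<in> {j \<in> {1..k}. (q \<circ> simple i) j \<le> m}"
      using simple_mem_atLeastAtMost_iff[OF assms, of l] by simp
  qed
  moreover have "inj_on (simple i) A" for A
    using inj_on_inverseI[of A "simple i" "simple i"] by simp
  ultimately show ?thesis
    by (simp add: card_image)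
qed

text \<open>The lifting property: if \<open>p s\<^sub>i > p\<close> then \<open>v \<le> p\<close> implies both \<open>v \<le> p s\<^sub>i\<close> and \<open>v s\<^sub>i \<le> p s\<^sub>i\<close>.
  Only the counts at \<open>k = i\<close> change, by one indicator each.\<close>
lemma tableau_le_comp_simple:
  assumes i: "1 \<le> i" and up: "p i < p (Suc i)" and le: "tableau_le v p"
  shows "tableau_le v (p \<circ> simple i)" "tableau_le (v \<circ> simple i) (p \<circ> simple i)"
proof -
  define N where "N q k m = card {j \<in> {1..k}. q j \<le> m}" for q :: "nat \<Rightarrow> nat" and k m
  obtain k0 where k0: "i = Suc k0" using i by (cases i) auto
  have other: "N (q \<circ> simple i) k m = N q k m" if "k \<noteq> i" for q k m
    unfolding N_def using that by (intro card_filter_comp_simple[OF i]) simp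
  have step: "N q (Suc k) m = N q k m + (if q (Suc k) \<le> m then 1 else 0)" for q k m
    unfolding N_def by (rule card_filter_atLeastAtMost_Suc)
  have at_i: "N (q \<circ> simple i) i m = N q k0 m + (if q (Suc i) \<le> m then 1 else 0)" for q m
    using step[of "q \<circ> simple i" k0 m] other[of k0 q m] k0 by (simp add: simple_def)
  have G: "N p k m \<le> N v k m" for k m
    using le unfolding tableau_le_def N_def by blast
  have G_i: "N p k0 m + (if p i \<le> m then 1 else 0) \<le> N v k0 m + (if v i \<le> m then 1 else 0)" for m
    using G[of i m] step[of p k0 m] step[of v k0 m] k0 by simp
  have G_Suc_i: "N p k0 m + (if p i \<le> m then 1 else 0) + (if p (Suc i) \<le> m then 1 else 0)
      \<le> N v k0 m + (if v i \<le> m then 1 else 0) + (if v (Suc i) \<le> m then 1 else 0)" for m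
    using G[of "Suc i" m] step[of p i m] step[of v i m] step[of p k0 m] step[of v k0 m] k0 by simp
  have "N (p \<circ> simple i) k m \<le> N v k m" for k m
  proof (cases "k = i")
    case True
    have "N (p \<circ> simple i) i m \<le> N p k0 m + (if p i \<le> m then 1 else 0)"
      using at_i[of p m] up by auto
    also have "\<dots> \<le> N v i m" using G_i[of m] step[of v k0 m] k0 by simp
    finally show ?thesis using True by simp
  qed (use G other in simp)
  then show "tableau_le v (p \<circ> simple i)"
    unfolding tableau_le_def N_def by blast
  have "N (p \<circ> simple i) k m \<le> N (v \<circ> simple i) k m" for k m
  proof (cases "k = i")
    case True
    have "N p k0 m + (if p (Suc i) \<le> m then 1 else 0) \<le> N v k0 m + (if v (Suc i) \<le> m then 1 else 0)"
    proof (cases "p (Suc i) \<le> m")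
      case True
      then show ?thesis using G_Suc_i[of m] up by (simp split: if_splits)
    qed (use G[of k0 m] in simp)
    then show ?thesis using True at_i[of p m] at_i[of v m] by simp
  qed (use G other in simp)
  then show "tableau_le (v \<circ> simple i) (p \<circ> simple i)"
    unfolding tableau_le_def N_def by blast
qed

lemma tTinv_word_snoc_expand:
  assumes i: "1 \<le> i" "i < n"
  shows "tTinv_word n (ws @ [i]) = (\<lambda>w. rmul_s n i (tTinv_word n ws) w + (1 - tvar) * tTinv_word n ws w)"
proof -
  have "tTinv i = (\<lambda>w. 1 * Tb (simple i) w + (1 - tvar) * hone w)" unfolding tTinv_def by simp
  then have "tTinv_word n (ws @ [i])
      = (\<lambda>w. 1 * hmult n (tTinv_word n ws) (Tb (simple i)) w + (1 - tvar) * hmult n (tTinv_word n ws) hone w)"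
    unfolding tTinv_word_snoc using hmult_lincomb_right[of n "tTinv_word n ws" 1 "Tb (simple i)" "1 - tvar" hone]
    by simp
  then show ?thesis unfolding hmult_Tb_simple[OF i] hmult_hone_right by simp
qed

lemma tTinv_word_support:
  "valid_word n ws \<Longrightarrow> len n (word_perm ws) = length ws \<Longrightarrow> tTinv_word n ws w \<noteq> 0
   \<Longrightarrow> tableau_le w (word_perm ws)"
proof (induction ws arbitrary: w rule: rev_induct)
  case Nil
  then have "w = id" unfolding tTinv_word_def hone_def Tb_def by (simp split: if_splits)
  then show ?case using tableau_le_refl by simp
next
  case (snoc i ws)
  have i: "1 \<le> i" "i < n" and vw: "valid_word n ws" using snoc.prems by auto
  define p where "p = word_perm ws"
  have pS: "p \<in> Sn n" unfolding p_def by (rule word_perm_in_Sn[OF vw])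
  have wp: "word_perm (ws @ [i]) = p \<circ> simple i" unfolding p_def by simp
  have l1: "len n (p \<circ> simple i) = Suc (length ws)" using snoc.prems(2) unfolding wp by (simp add: comp_def)
  have "len n p \<le> length ws" using len_comp_word_perm_le[OF vw, of id] unfolding p_def by simp
  then have lp: "len n p = length ws" using l1 len_comp_simple_le[OF i, of p] by linarith
  have "\<not> p (Suc i) < p i" using len_comp_simple_less_iff[OF pS i] l1 lp by simp
  moreover have "p i \<noteq> p (Suc i)" using Sn_inj[OF pS] by (simp add: inj_eq)
  ultimately have up: "p i < p (Suc i)" by simp
  have IH: "\<And>w. tTinv_word n ws w \<noteq> 0 \<Longrightarrow> tableau_le w p"
    using snoc.IH[OF vw] lp unfolding p_def by simp
  have "tTinv_word n ws w \<noteq> 0 \<or> tTinv_word n ws (w \<circ> simple i) \<noteq> 0"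
    using snoc.prems(3) rmul_s_nonzero unfolding tTinv_word_snoc_expand[OF i] by fastforce
  then show ?case
  proof
    assume "tTinv_word n ws w \<noteq> 0"
    then show ?thesis unfolding wp using tableau_le_comp_simple(1)[OF i(1) up] IH by blast
  next
    assume "tTinv_word n ws (w \<circ> simple i) \<noteq> 0"
    then have "tableau_le (w \<circ> simple i \<circ> simple i) (p \<circ> simple i)"
      using tableau_le_comp_simple(2)[OF i(1) up] IH by blast
    moreover have "w \<circ> simple i \<circ> simple i = w" by (simp add: fun_eq_iff)
    ultimately show ?thesis unfolding wp by (simp add: comp_def)
  qed
qed

section \<open>Columns\<close>

definition uC_list :: "nat \<Rightarrow> nat set \<Rightarrow> nat list" where
  "uC_list n C = sorted_list_of_set C @ sorted_list_of_set ({1..n} - C)"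

lemma uC_list_props:
  assumes C: "C \<subseteq> {1..n}"
  shows "distinct (uC_list n C)" "set (uC_list n C) = {1..n}" "length (uC_list n C) = n"
proof -
  have fC: "finite C" using C finite_subset by blast
  show d: "distinct (uC_list n C)" unfolding uC_list_def using fC by auto
  show s: "set (uC_list n C) = {1..n}" unfolding uC_list_def using fC C by auto
  show "length (uC_list n C) = n" using distinct_card[OF d] s by simp
qed

lemma uC_eq_nth: "k \<in> {1..n} \<Longrightarrow> uC n C k = uC_list n C ! (k - 1)"
  unfolding uC_def uC_list_def by simp

lemma uC_in_Sn:
  assumes C: "C \<subseteq> {1..n}" shows "uC n C \<in> Sn n"
proof -
  note L = uC_list_props[OF C]
  have "inj_on (uC n C) {1..n}"
  proof (rule inj_onI)
    fix x y assume x: "x \<in> {1..n}" and y: "y \<in> {1..n}" and "uC n C x = uC n C y"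
    then have "uC_list n C ! (x - 1) = uC_list n C ! (y - 1)" using uC_eq_nth by simp
    then have "x - 1 = y - 1" using nth_eq_iff_index_eq[OF L(1)] L(3) x y by auto
    then show "x = y" using x y by auto
  qed
  moreover have "uC n C ` {1..n} = {1..n}"
  proof
    show "uC n C ` {1..n} \<subseteq> {1..n}"
    proof
      fix y assume "y \<in> uC n C ` {1..n}"
      then obtain x where x: "x \<in> {1..n}" "y = uC n C x" by blast
      then have "y \<in> set (uC_list n C)"
        using uC_eq_nth[OF x(1)] L(3) nth_mem[of "x - 1" "uC_list n C"] by auto
      then show "y \<in> {1..n}" using L(2) by simp
    qed
    show "{1..n} \<subseteq> uC n C ` {1..n}"
    proof
      fix y assume "y \<in> {1..n}"
      then obtain j where j: "j < n" "uC_list n C ! j = y" using L(2,3) by (metis in_set_conv_nth)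
      then have "uC n C (Suc j) = y" "Suc j \<in> {1..n}" using uC_eq_nth[of "Suc j" n C] by simp_all
      then show "y \<in> uC n C ` {1..n}" by (metis image_eqI)
    qed
  qed
  ultimately have "uC n C permutes {1..n}"
    by (intro bij_imp_permutes) (auto simp: bij_betw_def uC_def)
  then show ?thesis by (simp add: Sn_def)
qed

lemma uC_image:
  assumes C: "C \<subseteq> {1..n}" shows "uC n C ` {1..card C} = C"
proof -
  have fC: "finite C" using C finite_subset by blast
  have cn: "card C \<le> n" using card_mono[OF _ C] by simp
  let ?s = "sorted_list_of_set C"
  have ls: "length ?s = card C" using fC by simp
  have "uC n C ` {1..card C} = (\<lambda>k. ?s ! (k - 1)) ` {1..card C}"
    by (rule image_cong) (use cn ls in \<open>auto simp: uC_eq_nth uC_list_def nth_append\<close>)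
  also have "\<dots> = set ?s"
  proof
    show "(\<lambda>k. ?s ! (k - 1)) ` {1..card C} \<subseteq> set ?s" using ls by auto
    show "set ?s \<subseteq> (\<lambda>k. ?s ! (k - 1)) ` {1..card C}"
    proof
      fix y assume "y \<in> set ?s"
      then obtain j where j: "j < card C" "?s ! j = y" using ls by (auto simp: in_set_conv_nth)
      then show "y \<in> (\<lambda>k. ?s ! (k - 1)) ` {1..card C}"
        using image_eqI[of y "\<lambda>k. ?s ! (k - 1)" "Suc j"] by simp
    qed
  qed
  also have "\<dots> = C" using fC by simp
  finally show ?thesis .
qed

lemma sorted_list_of_set_nth_le_iff:
  assumes "finite S" "j < card S" "k < card S"
  shows "sorted_list_of_set S ! j \<le> sorted_list_of_set S ! k \<longleftrightarrow> j \<le> k"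
proof -
  have sorted: "sorted_wrt (<) (sorted_list_of_set S)" and len: "length (sorted_list_of_set S) = card S"
    using assms(1) by simp_all
  show ?thesis
  proof (cases j k rule: linorder_cases)
    case less
    then show ?thesis using sorted_wrt_nth_less[OF sorted less] len assms(3) by simp
  next
    case greater
    then show ?thesis using sorted_wrt_nth_less[OF sorted greater] len assms(2) by simp
  qed simp
qed

lemma card_Int_atMost_ge:
  assumes fin: "finite S" and i: "1 \<le> i" "i \<le> card S" and le: "col S i \<le> m"
  shows "i \<le> card (S \<inter> {..m})"
proof -
  let ?s = "sorted_list_of_set S"
  have "set (take i ?s) \<subseteq> S \<inter> {..m}"
  proof
    fix x assume "x \<in> set (take i ?s)"
    then obtain j where j: "j < i" "x = ?s ! j" using fin i by (auto simp: in_set_conv_nth)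
    moreover have "i - 1 < card S" using i by simp
    ultimately show "x \<in> S \<inter> {..m}"
      using sorted_list_of_set_nth_le_iff[OF fin, of j "i - 1"] le i fin nth_mem[of j ?s]
      unfolding col_def by auto
  qed
  moreover have "card (set (take i ?s)) = i"
    using distinct_card[of "take i ?s"] fin i by simp
  ultimately show ?thesis
    using card_mono[of "S \<inter> {..m}"] fin by (metis finite_Int)
qed

lemma card_Int_atMost_less:
  assumes fin: "finite S" and i: "1 \<le> i" "i \<le> card S" and less: "m < col S i"
  shows "card (S \<inter> {..m}) < i"
proof -
  let ?s = "sorted_list_of_set S"
  have sub: "S \<inter> {..m} \<subseteq> set (take (i - 1) ?s)"
  proof
    fix x assume x: "x \<in> S \<inter> {..m}"
    then obtain j where j: "j < card S" "?s ! j = x" using fin by (metis IntD1 in_set_conv_nth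
          sorted_list_of_set.length_sorted_key_list_of_set sorted_list_of_set.set_sorted_key_list_of_set)
    moreover have "i - 1 < card S" using i by simp
    ultimately have "j < i - 1"
      using sorted_list_of_set_nth_le_iff[OF fin, of "i - 1" j] x less unfolding col_def by auto
    then show "x \<in> set (take (i - 1) ?s)" using j fin by (auto simp: in_set_conv_nth)
  qed
  have "card (S \<inter> {..m}) \<le> i - 1"
    using card_mono[OF _ sub] card_length[of "take (i - 1) ?s"] by simp
  then show ?thesis using i by simp
qed

lemma not_semistandard_card_Int_atMost:
  assumes F: "F \<in> B n b" and E: "E \<in> B n a" and ab: "a \<le> b" and ns: "\<not> semistandard a F E"
  obtains M where "card (F \<inter> {..M}) < card (E \<inter> {..M})"
proof -
  have fin: "finite E" "finite F" and card: "card E = a" "card F = b"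
    using E F by (auto simp: B_def intro: finite_subset)
  obtain i where i: "1 \<le> i" "i \<le> a" and lt: "col E i < col F i"
    using ns unfolding semistandard_def by auto
  have "i \<le> card (E \<inter> {..col E i})"
    using card_Int_atMost_ge[OF fin(1) i(1)] i card by simp
  moreover have "card (F \<inter> {..col E i}) < i"
    using card_Int_atMost_less[OF fin(2) i(1)] i card ab lt by simp
  ultimately have "card (F \<inter> {..col E i}) < card (E \<inter> {..col E i})" by linarith
  then show ?thesis by (rule that)
qed

lemma scaled_hinverse_Tb_inv:
  assumes "u \<in> Sn n"
  shows "hsmult (tvar ^ len n u) (hinverse n (Tb (inv u))) = tTinv_word n (reduced_word n u)"
  unfolding hinverse_Tb_inv[OF assms] hsmult_hsmult tinv_pow_mult_tvar_pow(2) by simp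

lemma finite_B: "finite (B n b)"
  by (rule finite_subset[of _ "Pow {1..n}"]) (auto simp: B_def)

lemma card_image_Int_atMost:
  assumes "inj q" shows "card (q ` A \<inter> {..m}) = card {j \<in> A. q j \<le> m}"
proof -
  have "q ` A \<inter> {..m} = q ` {j \<in> A. q j \<le> m}" by auto
  then show ?thesis using assms by (simp add: card_image inj_on_subset)
qed

lemma hmult_Tb_uC_support:
  assumes G: "G \<in> B n b" and g: "in_Hpar n (varpi b) g" and nz: "hmult n (Tb (uC n G)) g w \<noteq> 0"
  shows "w ` {1..b} = G"
proof -
  have G': "G \<subseteq> {1..n}" "card G = b" using G by (auto simp: B_def)
  obtain z where "Tb (uC n G) z \<noteq> 0" "z ` {1..b} = w ` {1..b}"
    using hmult_in_Hpar_support[OF Tb_in_Hn[OF uC_in_Sn[OF G'(1)]] g nz] by blast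
  then show ?thesis using uC_image[OF G'(1)] G'(2) by (simp add: Tb_def split: if_splits)
qed

lemma scaled_hinverse_hmult_support:
  assumes u: "u \<in> Sn n" and h: "in_Hpar n (varpi a) h"
    and nz: "hmult n (hsmult (tvar ^ len n u) (hinverse n (Tb (inv u)))) h w \<noteq> 0"
  shows "card (u ` {1..a} \<inter> {..m}) \<le> card (w ` {1..a} \<inter> {..m})"
proof -
  note r = reduced_word_spec[OF u]
  obtain z where z: "tTinv_word n (reduced_word n u) z \<noteq> 0" "z ` {1..a} = w ` {1..a}"
    using hmult_in_Hpar_support[OF in_Hn_tTinv_word h] nz
    unfolding scaled_hinverse_Tb_inv[OF u] by blast
  have "tableau_le z u"
    using tTinv_word_support[OF r(1) _ z(1)] r(2,3) by simp
  moreover have "z \<in> Sn n"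
    using z(1) in_Hn_tTinv_word unfolding in_Hn_def by blast
  ultimately show ?thesis
    unfolding z(2)[symmetric] tableau_le_def
    by (simp add: card_image_Int_atMost Sn_inj[OF u] Sn_inj)
qed

lemma hmult_Tb_eq_zero:
  assumes u: "u \<in> Sn n" and x: "in_Hn n x" and zero: "\<And>w. hmult n (Tb u) x w = 0"
  shows "x w = 0"
proof -
  obtain Z where Z: "in_Hn n Z" "hmult n Z (Tb u) = hone"
    using Tb_inv_inverse(1,3)[OF Sn_inv[OF u]] unfolding Sn_inv_inv[OF u] by blast
  have "x = hmult n (hmult n Z (Tb u)) x" using hmult_hone_left[OF x] Z(2) by simp
  also have "\<dots> = hmult n Z (hmult n (Tb u) x)" by (rule hmult_assoc[OF Z(1) Tb_in_Hn[OF u] x])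
  also have "hmult n (Tb u) x = (\<lambda>_. 0)" using zero by auto
  finally show ?thesis by (simp add: hmult_def)
qed

theorem proposition5p2:
  fixes n a b :: nat and h :: hecke and E :: "nat set"
    and hF :: "nat set \<Rightarrow> hecke" and F :: "nat set"
  assumes "1 \<le> a" "a \<le> b" "b \<le> n"
    and "in_Hpar n (varpi a) h"
    and "E \<in> B n a"
    and "\<forall>G\<in>B n b. in_Hpar n (varpi b) (hF G)"
    and "hmult n (hsmult (tvar ^ len n (uC n E)) (hinverse n (Tb (inv (uC n E))))) h
         = (\<lambda>w. \<Sum>G\<in>B n b. hmult n (Tb (uC n G)) (hF G) w)"
    and "F \<in> B n b"
    and "\<not> semistandard a F E"
  shows "\<forall>w. hF F w = 0"
proof -
  note ab = assms(2) and h = assms(4) and E = assms(5) and hF = assms(6)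
    and expansion = assms(7) and F = assms(8) and ns = assms(9)
  have E': "E \<subseteq> {1..n}" "card E = a" and F': "F \<subseteq> {1..n}" using E F by (auto simp: B_def)
  obtain M where M: "card (F \<inter> {..M}) < card (E \<inter> {..M})"
    using not_semistandard_card_Int_atMost[OF F E ab ns] .
  have "hmult n (Tb (uC n F)) (hF F) w = 0" for w
  proof (cases "w ` {1..b} = F")
    case True
    have "card (w ` {1..a} \<inter> {..M}) \<le> card (F \<inter> {..M})"
      using True ab F' by (intro card_mono) (auto intro: finite_subset)
    then have "hmult n (hsmult (tvar ^ len n (uC n E)) (hinverse n (Tb (inv (uC n E))))) h w = 0"
      using scaled_hinverse_hmult_support[OF uC_in_Sn[OF E'(1)] h, of w M] uC_image[OF E'(1)] E'(2) M
      by fastforce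
    moreover have "(\<Sum>G\<in>B n b - {F}. hmult n (Tb (uC n G)) (hF G) w) = 0"
      using hmult_Tb_uC_support[of _ n b _ w] hF True by (intro sum.neutral) blast
    ultimately show ?thesis
      using fun_cong[OF expansion, of w] sum.remove[OF finite_B F, of "\<lambda>G. hmult n (Tb (uC n G)) (hF G) w"]
      by simp
  qed (use hmult_Tb_uC_support[OF F] hF F in blast)
  then show ?thesis
    using hmult_Tb_eq_zero[OF uC_in_Sn[OF F'] in_Hpar_in_Hn] hF F by blast
qed

end
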